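(* Let $H=H_0+\lambda H_I$ be Hermitian on a finite-dimensional Hilbert space, and for $\beta>0$ let $\rho_\beta=e^{-\beta H}/Z$, $Z=\operatorname{Tr}e^{-\beta H}$, $\tilde\rho_\beta=\mathcal{P}\rho_\beta$, $\tilde H=\tilde H(\beta)=-\beta^{-1}\log\mathcal{P}e^{-\beta H}$ (so $\tilde\rho_\beta=e^{-\beta\tilde H}/Z$). Let $F=-\beta^{-1}\ln Z$, $S=\beta^2\partial_\beta F$, $U=\partial_\beta(\beta F)$, $\tilde S=-\operatorname{Tr}\tilde\rho_\beta\ln\tilde\rho_\beta$, $\tilde U=\operatorname{Tr}\tilde H\tilde\rho_\beta$. Then $S=-\operatorname{Tr}\rho_\beta\ln\rho_\beta$, $U=\operatorname{Tr}H\rho_\beta$, and $$S=\tilde S-\Delta S,\quad U=\tilde U-\Delta U,\qquad \Delta S=-\beta^2\operatorname{Tr}\big(\tilde\rho_\beta\,\partial_\beta\tilde H\big),\quad \Delta U=-\beta\operatorname{Tr}\big(\tilde\rho_\beta\,\partial_\beta\tilde H\big)=\beta^{-1}\Delta S.$$ Moreover $\Delta S\ge0$ and $\Delta U\ge0$.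
   Context: $H_0=\sum_\varepsilon\varepsilon\Pi_\varepsilon$ is the spectral decomposition of $H_0$ and $\mathcal{P}X=\sum_\varepsilon\Pi_\varepsilon X\Pi_\varepsilon$ (the long-time average $\lim_{T\to\infty}\frac1T\int_0^Te^{iH_0t}Xe^{-iH_0t}dt$). *)

theory Defs
  imports "HOL-Analysis.Analysis"
begin

type_synonym 'n cmat = "complex^'n^'n"

definition cadj :: "'n::finite cmat \<Rightarrow> 'n cmat" where
  "cadj A = (\<chi> i j. cnj (A $ j $ i))"

definition hermitian :: "'n::finite cmat \<Rightarrow> bool" where
  "hermitian A \<longleftrightarrow> cadj A = A"

primrec mpow :: "'n::finite cmat \<Rightarrow> nat \<Rightarrow> 'n cmat" where
  "mpow A 0 = mat 1"
| "mpow A (Suc k) = A ** mpow A k"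

definition mexp :: "'n::finite cmat \<Rightarrow> 'n cmat" where
  "mexp A = (\<Sum>k. (1 / fact k) *\<^sub>R mpow A k)"

definition mlog :: "'n::finite cmat \<Rightarrow> 'n cmat" where
  "mlog A = (THE L. hermitian L \<and> mexp L = A)"

definition eigenvalues :: "'n::finite cmat \<Rightarrow> complex set" where
  "eigenvalues A = {e. \<exists>v. v \<noteq> 0 \<and> A *v v = e *s v}"

definition orth_proj :: "'n::finite cmat \<Rightarrow> bool" where
  "orth_proj P \<longleftrightarrow> P ** P = P \<and> hermitian P"

definition eigenproj :: "'n::finite cmat \<Rightarrow> complex \<Rightarrow> 'n cmat" where
  "eigenproj A e = (THE P. orth_proj P \<and> range ((*v) P) = {v. A *v v = e *s v})"

definition pinch :: "'n::finite cmat \<Rightarrow> 'n cmat \<Rightarrow> 'n cmat" where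
  "pinch H0 X = (\<Sum>e\<in>eigenvalues H0. eigenproj H0 e ** X ** eigenproj H0 e)"

definition partition_fn :: "'n::finite cmat \<Rightarrow> real \<Rightarrow> real" where
  "partition_fn H b = Re (trace (mexp ((- b) *\<^sub>R H)))"

definition gibbs :: "'n::finite cmat \<Rightarrow> real \<Rightarrow> 'n cmat" where
  "gibbs H b = (1 / partition_fn H b) *\<^sub>R mexp ((- b) *\<^sub>R H)"

definition free_energy :: "'n::finite cmat \<Rightarrow> real \<Rightarrow> real" where
  "free_energy H b = - ln (partition_fn H b) / b"

definition eff_ham :: "'n::finite cmat \<Rightarrow> 'n cmat \<Rightarrow> real \<Rightarrow> 'n cmat" where
  "eff_ham H0 H b = (- 1 / b) *\<^sub>R mlog (pinch H0 (mexp ((- b) *\<^sub>R H)))"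

end

theory Submission
  imports Defs
begin

(* Diagonalise H = W diag(h) W^*: then rho, log rho and the free energy are explicit sums,
   which gives S = -Tr(rho log rho) = beta U + log Z and U = Tr(H rho).

   For the pinched state, rho~ = M(beta) / Z with M(b) = P(exp(-b H)). Pinching cannot move the
   spectrum outside that of exp(-b H), so near beta the spectrum of M(b) stays in a fixed interval
   [a, B] with a > 0, and log M(b) is one power series in 1 - M(b)/(2B), differentiable
   termwise. The derivative L' of log M is never computed: by cyclicity of the trace the series
   for Tr(M L') telescopes to Tr(M') = -Tr(H exp(-beta H)). With H~(b) = -(1/b) log M(b) this
   yields beta Tr(rho~ dH~/dbeta) = U - U~, and the stated identities follow by algebra.

   Finally Delta S = S~ - S = Tr(rho log rho) - Tr(rho log rho~): log rho~ commutes with the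
   spectral projections of H0, so P fixes it and Tr(rho~ log rho~) = Tr(rho log rho~). This
   relative entropy is nonnegative by Klein's inequality, proved from ln x <= x - 1 weighted by
   the doubly stochastic matrix |<u_i, w_j>|^2 of overlaps of the two eigenbases. *)

section \<open>Matrix algebra\<close>

definition diag_mat :: "('n::finite \<Rightarrow> complex) \<Rightarrow> 'n cmat" where
  "diag_mat d = (\<chi> i j. if i = j then d i else 0)"

definition unitary :: "'n::finite cmat \<Rightarrow> bool" where
  "unitary U \<longleftrightarrow> cadj U ** U = mat 1 \<and> U ** cadj U = mat 1"

definition cinner :: "complex^'n::finite \<Rightarrow> complex^'n \<Rightarrow> complex" where
  "cinner x y = (\<Sum>i\<in>UNIV. cnj (x$i) * y$i)"

lemma mat_nth: "mat a $ i $ j = (if i = j then a else 0)"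
  by (simp add: mat_def)

lemma mmult_nth: "(A ** B) $ i $ j = (\<Sum>k\<in>UNIV. A$i$k * B$k$j)"
  by (simp add: matrix_matrix_mult_def)

lemma mvmult_nth: "(A *v x) $ i = (\<Sum>k\<in>UNIV. A$i$k * x$k)"
  by (simp add: matrix_vector_mult_def)

lemma cadj_nth[simp]: "cadj A $ i $ j = cnj (A $ j $ i)"
  by (simp add: cadj_def)

lemma diag_mat_nth: "diag_mat d $ i $ j = (if i = j then d i else 0)"
  by (simp add: diag_mat_def)

lemma cadj_cadj[simp]: "cadj (cadj A) = A"
  by (simp add: cadj_def vec_eq_iff)

lemma cadj_mult: "cadj (A ** B) = cadj B ** cadj A"
  by (simp add: vec_eq_iff mmult_nth mult.commute)

lemma cadj_add: "cadj (A + B) = cadj A + cadj B"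
  by (simp add: vec_eq_iff)

lemma cadj_diff: "cadj (A - B) = cadj A - cadj B"
  by (simp add: vec_eq_iff)

lemma cadj_scaleR: "cadj (r *\<^sub>R A) = r *\<^sub>R cadj A"
  by (simp add: vec_eq_iff)

lemma cadj_mat[simp]: "cadj (mat (of_real r)) = mat (of_real r)"
  by (simp add: vec_eq_iff mat_nth)

lemma cadj_mat1[simp]: "cadj (mat 1) = mat 1"
  using cadj_mat[of 1] by simp

lemma cadj_zero[simp]: "cadj 0 = 0"
  by (simp add: vec_eq_iff)

lemma cadj_diag_mat: "cadj (diag_mat d) = diag_mat (\<lambda>i. cnj (d i))"
  by (simp add: vec_eq_iff diag_mat_nth)

lemma cadj_diag_mat_real[simp]: "cadj (diag_mat (\<lambda>i. complex_of_real (d i))) = diag_mat (\<lambda>i. complex_of_real (d i))"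
  by (simp add: cadj_diag_mat)

lemma hermitian_add: "hermitian A \<Longrightarrow> hermitian B \<Longrightarrow> hermitian (A + B)"
  by (simp add: hermitian_def cadj_add)

lemma hermitian_scaleR: "hermitian A \<Longrightarrow> hermitian (r *\<^sub>R A)"
  by (simp add: hermitian_def cadj_scaleR)

lemma hermitian_sum: "finite S \<Longrightarrow> (\<And>x. x \<in> S \<Longrightarrow> hermitian (f x)) \<Longrightarrow> hermitian (\<Sum>x\<in>S. f x)"
  by (induction S rule: finite_induct) (auto simp: hermitian_add hermitian_def cadj_add)

lemma hermitian_conj: "hermitian A \<Longrightarrow> hermitian (U ** A ** cadj U)"
  by (simp add: hermitian_def cadj_mult matrix_mul_assoc)

lemma hermitian_diag_mat_real: "hermitian (diag_mat (\<lambda>i. complex_of_real (d i)))"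
  by (simp add: hermitian_def)

lemma diag_mat_mult_left: "(diag_mat a ** B) $ i $ j = a i * B $ i $ j"
proof -
  have "(diag_mat a ** B) $ i $ j = (\<Sum>k\<in>UNIV. (if k = i then a i * B $ i $ j else 0))"
    unfolding mmult_nth diag_mat_nth by (rule sum.cong) auto
  thus ?thesis by simp
qed

lemma diag_mat_mult_right: "(B ** diag_mat a) $ i $ j = B $ i $ j * a j"
proof -
  have "(B ** diag_mat a) $ i $ j = (\<Sum>k\<in>UNIV. (if k = j then B $ i $ j * a j else 0))"
    unfolding mmult_nth diag_mat_nth by (rule sum.cong) auto
  thus ?thesis by simp
qed

lemma diag_mat_mult: "diag_mat a ** diag_mat b = diag_mat (\<lambda>i. a i * b i)"
  by (simp add: vec_eq_iff diag_mat_mult_left diag_mat_nth)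

lemma diag_mat_add: "diag_mat a + diag_mat b = diag_mat (\<lambda>i. a i + b i)"
  by (simp add: vec_eq_iff diag_mat_nth)

lemma diag_mat_diff: "diag_mat a - diag_mat b = diag_mat (\<lambda>i. a i - b i)"
  by (simp add: vec_eq_iff diag_mat_nth)

lemma diag_mat_scaleR: "r *\<^sub>R diag_mat a = diag_mat (\<lambda>i. r *\<^sub>R a i)"
  by (simp add: vec_eq_iff diag_mat_nth)

lemma diag_mat_const: "diag_mat (\<lambda>i. c) = mat c"
  by (simp add: vec_eq_iff diag_mat_nth mat_nth)

lemma diag_mat_zero[simp]: "diag_mat (\<lambda>i. 0) = 0"
  by (simp add: vec_eq_iff diag_mat_nth)

lemma trace_diag_mat: "trace (diag_mat d) = (\<Sum>i\<in>UNIV. d i)"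
  by (simp add: trace_def diag_mat_nth)

lemma trace_scaleR: "trace (r *\<^sub>R (A::'n::finite cmat)) = r *\<^sub>R trace A"
  by (simp add: trace_def scaleR_sum_right)

lemma trace_zero[simp]: "trace (0::'n::finite cmat) = 0"
  by (simp add: trace_def)

lemma trace_sum: "finite S \<Longrightarrow> trace (\<Sum>x\<in>S. f x) = (\<Sum>x\<in>S. trace (f x :: 'n::finite cmat))"
  by (induction S rule: finite_induct) (auto simp: trace_add)

lemma trace_uminus: "trace (- (A::'n::finite cmat)) = - trace A"
  by (simp add: trace_def sum_negf)

lemma scaleR_mult_left: "(r *\<^sub>R A) ** (B::'n::finite cmat) = r *\<^sub>R (A ** B)"
  by (simp add: vec_eq_iff mmult_nth scaleR_sum_right)

lemma scaleR_mult_right: "A ** (r *\<^sub>R (B::'n::finite cmat)) = r *\<^sub>R (A ** B)"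
  by (simp add: vec_eq_iff mmult_nth scaleR_sum_right)

lemma mult_add_left: "(A + B) ** (C::'n::finite cmat) = A ** C + B ** C"
  by (simp add: vec_eq_iff mmult_nth sum.distrib algebra_simps)

lemma mult_sum_left: "finite S \<Longrightarrow> (\<Sum>x\<in>S. f x) ** (B::'n::finite cmat) = (\<Sum>x\<in>S. f x ** B)"
  by (induction S rule: finite_induct) (auto simp: mult_add_left)

lemma mult_sum_right: "finite S \<Longrightarrow> B ** (\<Sum>x\<in>S. f x) = (\<Sum>x\<in>S. B ** (f x :: 'n::finite cmat))"
  by (induction S rule: finite_induct) (auto simp: matrix_add_ldistrib)

lemma mult_diff_left: "(A - B) ** (C::'n::finite cmat) = A ** C - B ** C"
  by (simp add: vec_eq_iff mmult_nth sum_subtractf algebra_simps)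

lemma mult_diff_right: "C ** (A - B) = C ** A - C ** (B::'n::finite cmat)"
  by (simp add: vec_eq_iff mmult_nth sum_subtractf algebra_simps)

lemma mult_uminus_left: "(- A) ** (C::'n::finite cmat) = - (A ** C)"
  by (simp add: vec_eq_iff mmult_nth sum_negf)

lemma mult_uminus_right: "C ** (- A) = - (C ** (A::'n::finite cmat))"
  by (simp add: vec_eq_iff mmult_nth sum_negf)

lemma mult_zero_left[simp]: "0 ** (A::'n::finite cmat) = 0"
  by (simp add: vec_eq_iff mmult_nth)

lemma mult_zero_right[simp]: "(A::'n::finite cmat) ** 0 = 0"
  by (simp add: vec_eq_iff mmult_nth)

lemma unitary_conj_mult: "unitary U \<Longrightarrow> (U ** A ** cadj U) ** (U ** B ** cadj U) = U ** (A ** B) ** cadj U"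
  by (simp add: unitary_def matrix_mul_assoc) (metis matrix_mul_assoc matrix_mul_rid)

lemma unitary_cadj: "unitary U \<Longrightarrow> unitary (cadj U)"
  by (simp add: unitary_def)

lemma unitary_mult: "unitary U \<Longrightarrow> unitary V \<Longrightarrow> unitary (U ** V)"
  unfolding unitary_def cadj_mult
  by (metis matrix_mul_assoc matrix_mul_rid)

lemma unitaryI_left: "cadj U ** U = mat 1 \<Longrightarrow> unitary U"
  by (simp add: unitary_def matrix_left_right_inverse)

lemma trace_conj: "unitary U \<Longrightarrow> trace (U ** A ** cadj U) = trace A"
  by (metis matrix_mul_assoc matrix_mul_lid trace_mul_sym unitary_def)

lemma mpow_conj: "unitary U \<Longrightarrow> mpow (U ** A ** cadj U) k = U ** mpow A k ** cadj U"
  apply (induction k)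
   apply (simp add: unitary_def)
  apply (simp add: unitary_conj_mult[symmetric])
  done

lemma mpow_diag_mat: "mpow (diag_mat d) k = diag_mat (\<lambda>i. d i ^ k)"
  by (induction k) (auto simp: diag_mat_mult diag_mat_const)

lemma cinner_add_right: "cinner x (y + z) = cinner x y + cinner x z"
  by (simp add: cinner_def algebra_simps sum.distrib)
lemma cinner_add_left: "cinner (x + y) z = cinner x z + cinner y z"
  by (simp add: cinner_def algebra_simps sum.distrib)
lemma cinner_diff_right: "cinner x (y - z) = cinner x y - cinner x z"
  by (simp add: cinner_def algebra_simps sum_subtractf)
lemma cinner_scale_right: "cinner x (c *s y) = c * cinner x y"
  by (simp add: cinner_def sum_distrib_left algebra_simps)
lemma cinner_scale_left: "cinner (c *s x) y = cnj c * cinner x y"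
  by (simp add: cinner_def sum_distrib_left algebra_simps)
lemma cinner_zero_right[simp]: "cinner x 0 = 0"
  by (simp add: cinner_def)
lemma cinner_zero_left[simp]: "cinner 0 x = 0"
  by (simp add: cinner_def)
lemma cinner_cnj: "cnj (cinner x y) = cinner y x"
  by (simp add: cinner_def mult.commute)
lemma mv_smult: "A *v (c *s x) = c *s (A *v (x::complex^'n::finite))"
  by (simp add: vec_eq_iff mvmult_nth sum_distrib_left algebra_simps)

lemma cinner_sum_right: "finite S \<Longrightarrow> cinner x (\<Sum>i\<in>S. f i) = (\<Sum>i\<in>S. cinner x (f i))"
  by (induction S rule: finite_induct) (auto simp: cinner_add_right)

lemma norm_vec_sq: "(norm (x::complex^'n::finite))\<^sup>2 = (\<Sum>i\<in>UNIV. (norm (x$i))\<^sup>2)"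
  by (simp add: norm_vec_def L2_set_def sum_nonneg)

lemma cinner_self: "cinner x x = complex_of_real ((norm x)\<^sup>2)"
  unfolding norm_vec_sq cinner_def of_real_sum complex_norm_square
  by (simp add: mult.commute)

lemma cinner_self_eq_0: "cinner x x = 0 \<longleftrightarrow> x = 0"
  by (simp add: cinner_self)

lemma cinner_mv: "cinner x (A *v y) = cinner (cadj A *v x) y"
  unfolding cinner_def mvmult_nth
  by (simp add: sum_distrib_left sum_distrib_right mult.assoc mult.left_commute)
     (rule sum.swap)

lemma cinner_mv_herm: "hermitian A \<Longrightarrow> cinner x (A *v y) = cinner (A *v x) y"
  by (simp add: cinner_mv hermitian_def)

lemma norm_smult_vec: "norm (c *s (x::complex^'n::finite)) = norm c * norm x"
proof -
  have "(norm (c *s x))\<^sup>2 = (norm c * norm x)\<^sup>2"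
    unfolding norm_vec_sq power_mult_distrib by (simp add: sum_distrib_left norm_mult power_mult_distrib)
  thus ?thesis by (simp add: power2_eq_iff_nonneg)
qed

section \<open>The spectral theorem for Hermitian matrices\<close>

lemma linear_coeff_zero_if_quadratic_nonpos:
  fixes a b :: real
  assumes "\<And>t. 2 * t * a + t\<^sup>2 * b \<le> 0"
  shows "a = 0"
proof -
  define c where "c = \<bar>b\<bar> + 1"
  have c: "c > 0" by (simp add: c_def)
  have "2 * (a / c) * a + (a / c)\<^sup>2 * b \<le> 0" by (rule assms)
  hence "c\<^sup>2 * (2 * (a / c) * a + (a / c)\<^sup>2 * b) \<le> 0"
    by (simp add: mult_nonneg_nonpos)
  also have "c\<^sup>2 * (2 * (a / c) * a + (a / c)\<^sup>2 * b) = a\<^sup>2 * (2 * c + b)"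
    using c by (simp add: field_simps power2_eq_square)
  finally have "a\<^sup>2 * (2 * c + b) \<le> 0" .
  moreover have "2 * c + b > 0" unfolding c_def by (cases "b \<ge> 0") auto
  ultimately have "a\<^sup>2 \<le> 0" by (simp add: mult_le_0_iff)
  thus ?thesis by simp
qed

definition quad_form :: "'n::finite cmat \<Rightarrow> complex^'n \<Rightarrow> real" where
  "quad_form A x = Re (cinner x (A *v x))"

lemma hermitian_cinner_quad_form: "hermitian A \<Longrightarrow> cinner x (A *v x) = complex_of_real (quad_form A x)"
proof -
  assume h: "hermitian A"
  have "cnj (cinner x (A *v x)) = cinner x (A *v x)"
    by (simp add: cinner_cnj cinner_mv_herm[OF h])
  thus ?thesis unfolding quad_form_def
    by (metis Reals_cnj_iff complex_is_Real_iff of_real_Re)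
qed

lemma continuous_quad_form: "continuous_on S (quad_form A)"
  unfolding quad_form_def cinner_def mvmult_nth
  by (intro continuous_intros)

lemma continuous_cinner: "continuous_on S (\<lambda>x. cinner u x)"
  unfolding cinner_def by (intro continuous_intros)

definition orth_compl :: "(complex^'n::finite) set \<Rightarrow> (complex^'n) set" where
  "orth_compl U = {x. \<forall>u\<in>U. cinner u x = 0}"

lemma orth_compl_add: "x \<in> orth_compl U \<Longrightarrow> y \<in> orth_compl U \<Longrightarrow> x + y \<in> orth_compl U"
  by (simp add: orth_compl_def cinner_add_right)

lemma orth_compl_diff: "x \<in> orth_compl U \<Longrightarrow> y \<in> orth_compl U \<Longrightarrow> x - y \<in> orth_compl U"
  by (simp add: orth_compl_def cinner_diff_right)

lemma orth_compl_scale: "x \<in> orth_compl U \<Longrightarrow> c *s x \<in> orth_compl U"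
  by (simp add: orth_compl_def cinner_scale_right)

lemma closed_orth_compl: "closed (orth_compl U)"
proof -
  have "orth_compl U = (\<Inter>u\<in>U. {x. cinner u x = 0})" by (auto simp: orth_compl_def)
  moreover have "closed {x. cinner u x = 0}" for u
    by (rule closed_Collect_eq) (auto intro: continuous_cinner continuous_intros)
  ultimately show ?thesis by auto
qed

lemma quad_form_scale: "quad_form A (c *s y) = (norm c)\<^sup>2 * quad_form A y"
proof -
  have "cinner (c *s y) (A *v (c *s y)) = (cnj c * c) * cinner y (A *v y)"
    by (simp add: cinner_scale_left cinner_scale_right mv_smult)
  thus ?thesis unfolding quad_form_def
    by (simp add: complex_norm_square[symmetric] mult.commute)
qed

lemma quad_form_attains_max:
  assumes w: "w \<in> orth_compl U" "w \<noteq> 0"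
  shows "\<exists>v\<in>orth_compl U. norm v = 1
    \<and> (\<forall>y\<in>orth_compl U. quad_form A y \<le> quad_form A v * (norm y)\<^sup>2)"
proof -
  define K where "K = orth_compl U \<inter> {x. norm x = 1}"
  have "compact K" unfolding compact_eq_bounded_closed K_def
    by (intro conjI bounded_Int closed_Int closed_orth_compl closed_Collect_eq)
       (auto simp: bounded_iff intro: continuous_intros)
  have unit: "complex_of_real (1 / norm y) *s y \<in> K" if "y \<in> orth_compl U" "y \<noteq> 0" for y
    unfolding K_def using that by (auto simp: orth_compl_scale norm_smult_vec norm_divide)
  hence "K \<noteq> {}" using w by blast
  from continuous_attains_sup[OF \<open>compact K\<close> this continuous_quad_form]
  obtain v where vK: "v \<in> K" and vmax: "\<And>y. y \<in> K \<Longrightarrow> quad_form A y \<le> quad_form A v" by blast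
  have "quad_form A y \<le> quad_form A v * (norm y)\<^sup>2" if "y \<in> orth_compl U" for y
  proof (cases "y = 0")
    case True thus ?thesis by (simp add: quad_form_def)
  next
    case False
    have "quad_form A y / (norm y)\<^sup>2 \<le> quad_form A v"
      using vmax[OF unit[OF that False]] by (simp add: quad_form_scale power_divide norm_divide)
    thus ?thesis using False by (simp add: field_simps)
  qed
  with vK show ?thesis unfolding K_def by blast
qed

text \<open>First variation: along v + t x the quadratic form, normalised by the squared norm, is
  maximal at t = 0, so the term linear in t vanishes.\<close>
lemma quad_form_max_first_variation:
  fixes A :: "'n::finite cmat"
  assumes herm: "hermitian A" and vW: "v \<in> orth_compl U" and vn: "norm v = 1"
    and vmax: "\<forall>y\<in>orth_compl U. quad_form A y \<le> quad_form A v * (norm y)\<^sup>2"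
    and xW: "x \<in> orth_compl U" and xv: "cinner v x = 0"
  shows "Re (cinner x (A *v v)) = 0"
proof (rule linear_coeff_zero_if_quadratic_nonpos)
  fix t :: real
  define lam where "lam = quad_form A v"
  define y where "y = v + complex_of_real t *s x"
  have vv: "cinner v v = 1" using vn by (simp add: cinner_self)
  have yW: "y \<in> orth_compl U" unfolding y_def by (intro orth_compl_add orth_compl_scale vW xW)
  have xv': "cinner x v = 0" using xv by (metis cinner_cnj complex_cnj_zero)
  have e1: "cinner y (A *v y) = cinner v (A *v v) + of_real t * (cinner v (A *v x) + cinner x (A *v v))
      + (of_real t)\<^sup>2 * cinner x (A *v x)"
  proof -
    have Ay: "A *v y = A *v v + of_real t *s (A *v x)"
      by (simp add: y_def matrix_vector_right_distrib mv_smult)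
    show ?thesis unfolding Ay unfolding y_def
      by (simp only: cinner_add_left cinner_add_right cinner_scale_left cinner_scale_right complex_cnj_complex_of_real)
         (simp add: power2_eq_square distrib_left add.assoc)
  qed
  have e2: "cinner v (A *v x) = cnj (cinner x (A *v v))"
    by (simp add: cinner_cnj cinner_mv_herm[OF herm])
  have "quad_form A y = lam + 2 * t * Re (cinner x (A *v v)) + t\<^sup>2 * quad_form A x"
    unfolding quad_form_def e1 e2 lam_def by (simp add: power2_eq_square)
  moreover have "(norm y)\<^sup>2 = 1 + t\<^sup>2 * (norm x)\<^sup>2"
  proof -
    have "cinner y y = 1 + (of_real t)\<^sup>2 * cinner x x"
      unfolding y_def by (simp add: cinner_add_left cinner_add_right cinner_scale_left
          cinner_scale_right vv xv xv' power2_eq_square)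
    hence "complex_of_real ((norm y)\<^sup>2) = complex_of_real (1 + t\<^sup>2 * (norm x)\<^sup>2)"
      unfolding cinner_self by simp
    thus ?thesis by (simp only: of_real_eq_iff)
  qed
  ultimately have "lam + 2 * t * Re (cinner x (A *v v)) + t\<^sup>2 * quad_form A x \<le> lam * (1 + t\<^sup>2 * (norm x)\<^sup>2)"
    using bspec[OF vmax yW] by (simp add: lam_def)
  thus "2 * t * Re (cinner x (A *v v)) + t\<^sup>2 * (quad_form A x - lam * (norm x)\<^sup>2) \<le> 0"
    by (simp add: algebra_simps)
qed

text \<open>The residual A v - \<mu> v lies in the invariant subspace and is orthogonal to v; testing the
  first variation with it and with i times it kills its inner product with A v.\<close>
lemma quad_form_max_eigenvector:
  fixes A :: "'n::finite cmat"
  assumes herm: "hermitian A" and inv: "\<And>x. x \<in> orth_compl U \<Longrightarrow> A *v x \<in> orth_compl U"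
    and vW: "v \<in> orth_compl U" and vn: "norm v = 1"
    and vmax: "\<forall>y\<in>orth_compl U. quad_form A y \<le> quad_form A v * (norm y)\<^sup>2"
  shows "A *v v = complex_of_real (quad_form A v) *s v"
proof -
  note first_variation = quad_form_max_first_variation[OF herm vW vn vmax]
  have vv: "cinner v v = 1" using vn by (simp add: cinner_self)
  define mu where "mu = cinner v (A *v v)"
  define w1 where "w1 = A *v v - mu *s v"
  have w1W: "w1 \<in> orth_compl U" unfolding w1_def by (intro orth_compl_diff orth_compl_scale inv vW)
  have w1v: "cinner v w1 = 0" unfolding w1_def mu_def by (simp add: cinner_diff_right cinner_scale_right vv)
  have "Re (cinner w1 (A *v v)) = 0" by (rule first_variation[OF w1W w1v])
  moreover have "Re (cinner (\<i> *s w1) (A *v v)) = 0"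
    by (rule first_variation) (auto simp: orth_compl_scale w1W cinner_scale_right w1v)
  ultimately have "cinner w1 (A *v v) = 0"
    by (simp add: cinner_scale_left complex_eq_iff)
  moreover have "cinner w1 v = 0" using w1v by (metis cinner_cnj complex_cnj_zero)
  moreover have "cinner w1 w1 = cinner w1 (A *v v) - mu * cinner w1 v"
    unfolding w1_def[symmetric] by (subst (2) w1_def) (simp only: cinner_diff_right cinner_scale_right)
  ultimately have "w1 = 0" by (simp add: cinner_self_eq_0)
  hence "A *v v = mu *s v" by (simp add: w1_def)
  moreover have "mu = complex_of_real (quad_form A v)" unfolding mu_def by (rule hermitian_cinner_quad_form[OF herm])
  ultimately show ?thesis by simp
qed

definition orthonormal_list :: "(complex^'n::finite) list \<Rightarrow> bool" where
  "orthonormal_list vs \<longleftrightarrow> (\<forall>i<length vs. \<forall>j<length vs. cinner (vs!i) (vs!j) = (if i = j then 1 else 0))"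

lemma orthonormal_list_orthogonal_vector:
  fixes vs :: "(complex^'n::finite) list"
  assumes on: "orthonormal_list vs" and len: "length vs < CARD('n)"
  shows "\<exists>w\<in>orth_compl (set vs). w \<noteq> 0"
proof (rule ccontr)
  assume contra: "\<not> ?thesis"
  define k where "k = length vs"
  have "x \<in> vec.span (set vs)" for x
  proof -
    define p where "p = (\<Sum>i<k. cinner (vs!i) x *s vs!i)"
    have "cinner u (x - p) = 0" if "u \<in> set vs" for u
    proof -
      obtain j where j: "j < k" "u = vs!j" using \<open>u \<in> set vs\<close> by (auto simp: in_set_conv_nth k_def)
      have "cinner u p = (\<Sum>i<k. cinner (vs!i) x * cinner (vs!j) (vs!i))"
        unfolding p_def j by (simp add: cinner_sum_right cinner_scale_right)
      also have "\<dots> = (\<Sum>i<k. if i = j then cinner (vs!j) x else 0)"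
        using on j unfolding orthonormal_list_def k_def by (intro sum.cong) auto
      also have "\<dots> = cinner u x" using j by simp
      finally show ?thesis by (simp add: cinner_diff_right)
    qed
    with contra have "x - p = 0" unfolding orth_compl_def by blast
    hence "x = p" by simp
    moreover have "p \<in> vec.span (set vs)" unfolding p_def
      by (intro vec.span_sum vec.span_scale vec.span_base) (auto simp: k_def)
    ultimately show ?thesis by simp
  qed
  hence "UNIV \<subseteq> vec.span (set vs)" by auto
  hence "vec.dim (UNIV :: (complex^'n) set) \<le> card (set vs)"
    by (intro vec.dim_le_card) auto
  also have "\<dots> \<le> length vs" by (rule card_length)
  finally show False using len vec_dim_card[where 'a=complex and 'n='n] by simp
qed

lemma orthonormal_list_snoc:
  assumes vs: "orthonormal_list vs" and v: "v \<in> orth_compl (set vs)" "cinner v v = 1"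
  shows "orthonormal_list (vs @ [v])"
  unfolding orthonormal_list_def
proof (intro allI impI)
  fix i j assume ij: "i < length (vs @ [v])" "j < length (vs @ [v])"
  have vj: "cinner (vs!j) v = 0" "cinner v (vs!j) = 0" if "j < length vs" for j
    using v(1) that cinner_cnj[of "vs!j" v] by (auto simp: orth_compl_def)
  show "cinner ((vs @ [v])!i) ((vs @ [v])!j) = (if i = j then 1 else 0)"
    using vs ij v(2) vj unfolding orthonormal_list_def
    by (cases "i < length vs"; cases "j < length vs") (auto simp: nth_append)
qed

lemma hermitian_orth_compl_invariant:
  assumes herm: "hermitian A" and eig: "\<And>u. u \<in> S \<Longrightarrow> \<exists>\<mu>::real. A *v u = complex_of_real \<mu> *s u"
    and x: "x \<in> orth_compl S"
  shows "A *v x \<in> orth_compl S"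
proof -
  have "cinner u (A *v x) = 0" if u: "u \<in> S" for u
  proof -
    obtain \<mu> :: real where "A *v u = complex_of_real \<mu> *s u" using eig[OF u] by blast
    hence "cinner u (A *v x) = complex_of_real \<mu> * cinner u x"
      by (simp add: cinner_mv_herm[OF herm] cinner_scale_left)
    thus ?thesis using x u by (simp add: orth_compl_def)
  qed
  thus ?thesis by (simp add: orth_compl_def)
qed

lemma hermitian_orthonormal_eigenvectors:
  fixes A :: "'n::finite cmat"
  assumes herm: "hermitian A"
  shows "k \<le> CARD('n) \<Longrightarrow> \<exists>vs mu. length vs = k \<and> orthonormal_list vs \<and>
           (\<forall>i<k. A *v (vs!i) = complex_of_real (mu i) *s vs!i)"
proof (induction k)
  case 0 thus ?case by (auto simp: orthonormal_list_def)
next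
  case (Suc k)
  then obtain vs mu where vs: "length vs = k" "orthonormal_list vs"
    "\<And>i. i<k \<Longrightarrow> A *v (vs!i) = complex_of_real (mu i) *s vs!i" by auto
  define W where "W = orth_compl (set vs)"
  have inv: "A *v x \<in> W" if "x \<in> W" for x
    unfolding W_def using that vs(1,3)
    by (intro hermitian_orth_compl_invariant[OF herm]) (auto simp: W_def in_set_conv_nth)
  obtain w where "w \<in> W" "w \<noteq> 0"
    using orthonormal_list_orthogonal_vector[OF vs(2)] vs(1) Suc.prems unfolding W_def by auto
  then obtain v where v: "v \<in> W" and vn: "norm v = 1"
    and vmax: "\<forall>y\<in>W. quad_form A y \<le> quad_form A v * (norm y)\<^sup>2"
    using quad_form_attains_max unfolding W_def by blast
  have Av: "A *v v = complex_of_real (quad_form A v) *s v"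
    using quad_form_max_eigenvector[OF herm _ _ vn vmax[unfolded W_def]] inv v unfolding W_def by blast
  define vs' where "vs' = vs @ [v]"
  have "orthonormal_list vs'"
    unfolding vs'_def using orthonormal_list_snoc[OF vs(2)] v vn unfolding W_def
    by (simp add: cinner_self)
  moreover have "A *v (vs'!i) = complex_of_real ((mu(k := quad_form A v)) i) *s vs'!i"
    if "i < Suc k" for i
    using that vs Av by (cases "i < k") (auto simp: vs'_def nth_append)
  moreover have "length vs' = Suc k" using vs by (simp add: vs'_def)
  ultimately show ?case by blast
qed

theorem hermitian_unitarily_diagonalizable:
  fixes A :: "'n::finite cmat"
  assumes herm: "hermitian A"
  shows "\<exists>U d. unitary U \<and> A = U ** diag_mat (\<lambda>i. complex_of_real (d i)) ** cadj U"
proof -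
  obtain vs mu where vs: "length vs = CARD('n)" "orthonormal_list vs"
    "\<And>i. i < CARD('n) \<Longrightarrow> A *v (vs!i) = complex_of_real (mu i) *s vs!i"
    using hermitian_orthonormal_eigenvectors[OF herm, of "CARD('n)"] by auto
  obtain idx :: "'n \<Rightarrow> nat" where idx: "bij_betw idx UNIV {0..<CARD('n)}"
    using ex_bij_betw_finite_nat[of "UNIV :: 'n set"] by auto
  have idxl: "idx i < CARD('n)" for i using idx by (auto simp: bij_betw_def)
  have idxi: "idx i = idx j \<longleftrightarrow> i = j" for i j using idx by (auto simp: bij_betw_def inj_on_def)
  define U :: "'n cmat" where "U = (\<chi> i j. vs ! idx j $ i)"
  define d where "d j = mu (idx j)" for j
  have "cadj U ** U = mat 1"
  proof -
    have "(cadj U ** U) $ i $ j = cinner (vs ! idx i) (vs ! idx j)" for i j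
      by (simp add: mmult_nth U_def cinner_def)
    also have "cinner (vs ! idx i) (vs ! idx j) = mat 1 $ i $ j" for i j
      using vs(1,2) idxl idxi unfolding orthonormal_list_def by (simp add: mat_nth)
    finally show ?thesis by (simp add: vec_eq_iff)
  qed
  hence U: "unitary U" by (rule unitaryI_left)
  have "A ** U = U ** diag_mat (\<lambda>i. complex_of_real (d i))"
  proof -
    have "(A ** U) $ i $ j = (A *v (vs ! idx j)) $ i" for i j
      by (simp add: mmult_nth mvmult_nth U_def)
    also have "(A *v (vs ! idx j)) $ i = (U ** diag_mat (\<lambda>i. complex_of_real (d i))) $ i $ j" for i j
      using vs(3)[OF idxl[of j]] by (simp add: diag_mat_mult_right U_def d_def mult.commute)
    finally show ?thesis by (simp add: vec_eq_iff)
  qed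
  hence "A ** U ** cadj U = U ** diag_mat (\<lambda>i. complex_of_real (d i)) ** cadj U" by simp
  hence "A = U ** diag_mat (\<lambda>i. complex_of_real (d i)) ** cadj U"
    using U by (simp add: unitary_def matrix_mul_assoc[symmetric])
  thus ?thesis using U by blast
qed

section \<open>Functional calculus of Hermitian matrices\<close>

lemma sums_matrix_entrywise:
  fixes c :: "nat \<Rightarrow> 'n::finite cmat"
  assumes "\<And>i j. (\<lambda>k. c k $ i $ j) sums (s $ i $ j)"
  shows "c sums s"
proof -
  have eq: "(\<Sum>k<n. c k) = (\<chi> i j. \<Sum>k<n. c k $ i $ j)" for n
    by (simp add: vec_eq_iff)
  have "(\<lambda>n. \<chi> i j. \<Sum>k<n. c k $ i $ j) \<longlonglongrightarrow> (\<chi> i j. s $ i $ j)"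
    using assms unfolding sums_def by (intro tendsto_vec_lambda) 
  thus ?thesis unfolding sums_def eq by simp
qed

definition udiag :: "'n::finite cmat \<Rightarrow> ('n \<Rightarrow> real) \<Rightarrow> 'n cmat" where
  "udiag U d = U ** diag_mat (\<lambda>i. complex_of_real (d i)) ** cadj U"

lemma hermitian_eq_udiag: "hermitian A \<Longrightarrow> \<exists>U d. unitary U \<and> A = udiag U d"
  using hermitian_unitarily_diagonalizable unfolding udiag_def by blast

lemma udiag_mult: "unitary U \<Longrightarrow> udiag U a ** udiag U b = udiag U (\<lambda>i. a i * b i)"
  unfolding udiag_def by (simp add: unitary_conj_mult diag_mat_mult)

lemma udiag_add: "udiag U a + udiag U b = udiag U (\<lambda>i. a i + b i)"
  unfolding udiag_def by (simp add: mult_add_left matrix_add_ldistrib diag_mat_add[symmetric])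

lemma udiag_diff: "udiag U a - udiag U b = udiag U (\<lambda>i. a i - b i)"
  unfolding udiag_def by (simp add: mult_diff_left mult_diff_right diag_mat_diff[symmetric])

lemma udiag_scaleR: "r *\<^sub>R udiag U a = udiag U (\<lambda>i. r * a i)"
proof -
  have "diag_mat (\<lambda>i. complex_of_real (r * a i)) = r *\<^sub>R diag_mat (\<lambda>i. complex_of_real (a i))"
    unfolding diag_mat_scaleR by (rule arg_cong[where f=diag_mat]) (simp add: fun_eq_iff of_real_def)
  thus ?thesis unfolding udiag_def by (simp add: scaleR_mult_left scaleR_mult_right)
qed

lemma udiag_uminus: "- udiag U a = udiag U (\<lambda>i. - a i)"
  using udiag_scaleR[of "-1" U a] by simp

lemma mat_scaleR: "mat (complex_of_real c) = c *\<^sub>R (mat 1 :: 'n::finite cmat)"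
  by (simp add: vec_eq_iff mat_nth of_real_def)

lemma udiag_const: "unitary U \<Longrightarrow> udiag U (\<lambda>i. c) = mat (complex_of_real c)"
  unfolding udiag_def diag_mat_const mat_scaleR
  by (simp add: scaleR_mult_left scaleR_mult_right unitary_def)

lemma udiag_one: "unitary U \<Longrightarrow> udiag U (\<lambda>i. 1) = mat 1"
  using udiag_const[of U 1] by simp

lemma hermitian_udiag: "hermitian (udiag U d)"
  unfolding udiag_def by (intro hermitian_conj hermitian_diag_mat_real)

lemma trace_udiag: "unitary U \<Longrightarrow> trace (udiag U d) = complex_of_real (\<Sum>i\<in>UNIV. d i)"
  unfolding udiag_def by (simp add: trace_conj trace_diag_mat)

lemma bounded_linear_conj: "bounded_linear (\<lambda>M::'n::finite cmat. (U::'n cmat) ** M ** (V::'n::finite cmat))"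
proof -
  have "linear (\<lambda>M::'n::finite cmat. (U::'n cmat) ** M ** (V::'n::finite cmat))"
    by (rule linearI) (simp_all add: mult_add_left matrix_add_ldistrib scaleR_mult_left scaleR_mult_right)
  thus ?thesis by (simp add: linear_conv_bounded_linear)
qed

lemma mexp_series_diag_mat:
  "(\<lambda>k. (1 / fact k) *\<^sub>R mpow (diag_mat (\<lambda>i. complex_of_real (d i))) k)
     sums diag_mat (\<lambda>i. complex_of_real (exp (d i)))"
proof (rule sums_matrix_entrywise)
  fix i j
  show "(\<lambda>k. ((1 / fact k) *\<^sub>R mpow (diag_mat (\<lambda>i. complex_of_real (d i))) k) $ i $ j) sums
          (diag_mat (\<lambda>i. complex_of_real (exp (d i))) $ i $ j)"
  proof (cases "i = j")
    case True
    have "(\<lambda>k. (complex_of_real (d i))^k /\<^sub>R fact k) sums exp (complex_of_real (d i))"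
      by (rule exp_converges)
    moreover have "(\<lambda>k. ((1 / fact k) *\<^sub>R mpow (diag_mat (\<lambda>i. complex_of_real (d i))) k) $ i $ j)
        = (\<lambda>k. (complex_of_real (d i))^k /\<^sub>R fact k)"
      using True by (simp add: mpow_diag_mat diag_mat_nth inverse_eq_divide)
    ultimately show ?thesis using True by (simp add: diag_mat_nth exp_of_real)
  next
    case False thus ?thesis by (simp add: mpow_diag_mat diag_mat_nth)
  qed
qed

lemma mexp_series_udiag:
  assumes U: "unitary U"
  shows "(\<lambda>k. (1 / fact k) *\<^sub>R mpow (udiag U d) k) sums udiag U (\<lambda>i. exp (d i))"
proof -
  have "(\<lambda>k. U ** ((1 / fact k) *\<^sub>R mpow (diag_mat (\<lambda>i. complex_of_real (d i))) k) ** cadj U)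
       sums (U ** diag_mat (\<lambda>i. complex_of_real (exp (d i))) ** cadj U)"
    by (rule bounded_linear.sums[OF bounded_linear_conj mexp_series_diag_mat])
  thus ?thesis unfolding udiag_def using U
    by (simp add: mpow_conj scaleR_mult_left scaleR_mult_right)
qed

lemma mexp_udiag: "unitary U \<Longrightarrow> mexp (udiag U d) = udiag U (\<lambda>i. exp (d i))"
  unfolding mexp_def using mexp_series_udiag sums_unique by metis

lemma mexp_inj_on_hermitian:
  assumes L1: "hermitian L1" and L2: "hermitian L2" and eq: "mexp L1 = mexp L2"
  shows "L1 = L2"
proof -
  obtain U a where U: "unitary U" and a: "L1 = udiag U a" using hermitian_eq_udiag[OF L1] by blast
  obtain V b where V: "unitary V" and b: "L2 = udiag V b" using hermitian_eq_udiag[OF L2] by blast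
  define W where "W = cadj V ** U"
  have e: "udiag U (\<lambda>i. exp (a i)) = udiag V (\<lambda>i. exp (b i))"
    using eq unfolding a b by (simp add: mexp_udiag U V)
  have key: "W ** diag_mat (\<lambda>i. complex_of_real (exp (a i))) = diag_mat (\<lambda>i. complex_of_real (exp (b i))) ** W"
  proof -
    have "cadj V ** udiag U (\<lambda>i. exp (a i)) ** U = cadj V ** udiag V (\<lambda>i. exp (b i)) ** U"
      using e by simp
    moreover have "cadj V ** udiag U (\<lambda>i. exp (a i)) ** U = W ** diag_mat (\<lambda>i. complex_of_real (exp (a i)))"
      unfolding udiag_def W_def using U unfolding unitary_def
      by (metis matrix_mul_assoc matrix_mul_rid)
    moreover have "cadj V ** udiag V (\<lambda>i. exp (b i)) ** U = diag_mat (\<lambda>i. complex_of_real (exp (b i))) ** W"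
      unfolding udiag_def W_def using V unfolding unitary_def
      by (metis matrix_mul_assoc matrix_mul_lid)
    ultimately show ?thesis by simp
  qed
  have key2: "W ** diag_mat (\<lambda>i. complex_of_real (a i)) = diag_mat (\<lambda>i. complex_of_real (b i)) ** W"
  proof -
    have "W $ i $ j * complex_of_real (a j) = complex_of_real (b i) * W $ i $ j" for i j
    proof -
      have "W $ i $ j * complex_of_real (exp (a j)) = complex_of_real (exp (b i)) * W $ i $ j"
        using arg_cong[OF key, of "\<lambda>M. M $ i $ j"] by (simp add: diag_mat_mult_left diag_mat_mult_right)
      hence "W $ i $ j = 0 \<or> exp (a j) = exp (b i)"
        by (metis mult.commute mult_cancel_left of_real_eq_iff)
      thus ?thesis by auto
    qed
    thus ?thesis by (simp add: vec_eq_iff diag_mat_mult_left diag_mat_mult_right)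
  qed
  have "L1 = V ** W ** diag_mat (\<lambda>i. complex_of_real (a i)) ** cadj U"
    unfolding a udiag_def W_def using V unfolding unitary_def
    by (metis matrix_mul_assoc matrix_mul_lid)
  also have "\<dots> = V ** diag_mat (\<lambda>i. complex_of_real (b i)) ** W ** cadj U"
    using key2 by (metis matrix_mul_assoc)
  also have "\<dots> = L2"
    unfolding b udiag_def W_def using U unfolding unitary_def
    by (metis matrix_mul_assoc matrix_mul_rid)
  finally show ?thesis .
qed

lemma mlog_eqI: "hermitian L \<Longrightarrow> mexp L = A \<Longrightarrow> mlog A = L"
  unfolding mlog_def by (rule the_equality) (auto intro: mexp_inj_on_hermitian)

lemma mlog_udiag: "unitary U \<Longrightarrow> (\<And>i. p i > 0) \<Longrightarrow> mlog (udiag U p) = udiag U (\<lambda>i. ln (p i))"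
  by (rule mlog_eqI) (simp_all add: hermitian_udiag mexp_udiag)

lemma mexp_mlog: "unitary U \<Longrightarrow> (\<And>i. p i > 0) \<Longrightarrow> mexp (mlog (udiag U p)) = udiag U p"
  by (simp add: mlog_udiag mexp_udiag)

lemma diag_mat_mv: "(diag_mat d *v w) $ i = d i * w $ i"
proof -
  have "(diag_mat d *v w) $ i = (\<Sum>k\<in>UNIV. if k = i then d i * w $ i else 0)"
    unfolding mvmult_nth diag_mat_nth by (rule sum.cong) auto
  thus ?thesis by simp
qed

lemma udiag_left: "unitary U \<Longrightarrow> cadj U ** udiag U d = diag_mat (\<lambda>i. complex_of_real (d i)) ** cadj U"
  unfolding udiag_def unitary_def by (metis matrix_mul_assoc matrix_mul_lid)

lemma udiag_right: "unitary U \<Longrightarrow> udiag U d ** U = U ** diag_mat (\<lambda>i. complex_of_real (d i))"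
  unfolding udiag_def unitary_def by (metis matrix_mul_assoc matrix_mul_rid)

lemma scaleR_mv: "(r *\<^sub>R A) *v x = complex_of_real r *s (A *v (x::complex^'n::finite))"
proof -
  have c: "(r *\<^sub>R A) $ i $ k = complex_of_real r * A $ i $ k" for i k
  proof -
    have "(r *\<^sub>R A) $ i $ k = r *\<^sub>R (A $ i $ k)" by simp
    also have "\<dots> = complex_of_real r * A $ i $ k" by (simp add: scaleR_conv_of_real)
    finally show ?thesis .
  qed
  show ?thesis by (simp add: vec_eq_iff mvmult_nth sum_distrib_left) (simp add: scaleR_conv_of_real mult.assoc)
qed

lemma udiag_zero: "udiag U (\<lambda>i. 0) = 0"
  unfolding udiag_def by simp

lemma udiag_sum: "finite S \<Longrightarrow> (\<Sum>x\<in>S. udiag U (f x)) = udiag U (\<lambda>i. \<Sum>x\<in>S. f x i)"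
  by (induction S rule: finite_induct) (auto simp: udiag_zero udiag_add)

lemma orth_proj_unique:
  assumes P: "orth_proj P" and Q: "orth_proj Q" and r: "range ((*v) P) = range ((*v) (Q::'n::finite cmat))"
  shows "P = Q"
proof -
  have PQ: "P ** Q = Q" if P: "orth_proj P" and Q: "orth_proj Q" and r: "range ((*v) P) = range ((*v) (Q::'n cmat))" for P Q
  proof (rule matrix_eq[THEN iffD2, rule_format])
    fix x
    have "Q *v x \<in> range ((*v) P)" using r by auto
    then obtain y where y: "Q *v x = P *v y" by auto
    have "(P ** Q) *v x = P *v (P *v y)" by (simp add: matrix_vector_mul_assoc[symmetric] y)
    also have "\<dots> = P *v y" using P by (simp add: matrix_vector_mul_assoc orth_proj_def)
    finally show "(P ** Q) *v x = Q *v x" using y by simp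
  qed
  have 1: "P ** Q = Q" by (rule PQ[OF P Q r])
  have 2: "Q ** P = P" by (rule PQ[OF Q P r[symmetric]])
  have "P = cadj P" using P by (simp add: orth_proj_def hermitian_def)
  also have "\<dots> = cadj (Q ** P)" using 2 by simp
  also have "\<dots> = P ** Q" using P Q by (simp add: cadj_mult orth_proj_def hermitian_def)
  finally show ?thesis using 1 by simp
qed

section \<open>Pinching\<close>

definition diag_values :: "('n::finite \<Rightarrow> real) \<Rightarrow> complex set" where
  "diag_values e0 = (\<lambda>i. complex_of_real (e0 i)) ` UNIV"

definition level_ind :: "('n::finite \<Rightarrow> real) \<Rightarrow> complex \<Rightarrow> 'n \<Rightarrow> real" where
  "level_ind e0 e j = (if complex_of_real (e0 j) = e then 1 else 0)"

definition level_proj :: "'n::finite cmat \<Rightarrow> ('n \<Rightarrow> real) \<Rightarrow> complex \<Rightarrow> 'n cmat" where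
  "level_proj V e0 e = udiag V (level_ind e0 e)"

lemma finite_diag_values[simp]: "finite (diag_values e0)"
  by (simp add: diag_values_def)

lemma eigenvalues_udiag:
  assumes V: "unitary V"
  shows "eigenvalues (udiag V e0) = diag_values e0"
proof
  show "eigenvalues (udiag V e0) \<subseteq> diag_values e0"
  proof
    fix e assume "e \<in> eigenvalues (udiag V e0)"
    then obtain v where v: "v \<noteq> 0" "udiag V e0 *v v = e *s v" by (auto simp: eigenvalues_def)
    define w where "w = cadj V *v v"
    have "V *v w = v" using V by (simp add: w_def matrix_vector_mul_assoc unitary_def)
    hence "w \<noteq> 0" using v by auto
    then obtain i where i: "w $ i \<noteq> 0" by (auto simp: vec_eq_iff)
    have "diag_mat (\<lambda>i. complex_of_real (e0 i)) *v w = (cadj V ** udiag V e0) *v v"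
      by (simp add: udiag_left[OF V] w_def matrix_vector_mul_assoc)
    also have "\<dots> = e *s w" by (simp add: matrix_vector_mul_assoc[symmetric] v w_def mv_smult)
    finally have "complex_of_real (e0 i) * w $ i = e * w $ i"
      by (metis diag_mat_mv vector_smult_component)
    hence "e = complex_of_real (e0 i)" using i by simp
    thus "e \<in> diag_values e0" by (simp add: diag_values_def)
  qed
  show "diag_values e0 \<subseteq> eigenvalues (udiag V e0)"
  proof
    fix e assume "e \<in> diag_values e0"
    then obtain i where e: "e = complex_of_real (e0 i)" by (auto simp: diag_values_def)
    define v where "v = V *v axis i 1"
    have "cadj V *v v = axis i 1" using V by (simp add: v_def matrix_vector_mul_assoc unitary_def)
    hence "v \<noteq> 0"
    proof (intro notI)
      assume "cadj V *v v = axis i 1" "v = 0"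
      hence "axis i (1::complex) $ i = 0" by simp
      thus False by (simp add: axis_def)
    qed
    moreover have "udiag V e0 *v v = e *s v"
    proof -
      have "udiag V e0 *v v = V *v (diag_mat (\<lambda>i. complex_of_real (e0 i)) *v axis i 1)"
        by (simp add: v_def matrix_vector_mul_assoc udiag_right[OF V])
      also have "diag_mat (\<lambda>i. complex_of_real (e0 i)) *v axis i 1 = e *s axis i 1"
        by (simp add: vec_eq_iff diag_mat_mv e axis_def)
      finally show ?thesis by (simp add: mv_smult v_def)
    qed
    ultimately show "e \<in> eigenvalues (udiag V e0)" by (auto simp: eigenvalues_def)
  qed
qed

lemma level_ind_sq: "level_ind e0 e j * level_ind e0 e j = level_ind e0 e j"
  by (simp add: level_ind_def)

lemma level_proj_idem: "unitary V \<Longrightarrow> level_proj V e0 e ** level_proj V e0 e = level_proj V e0 e"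
  unfolding level_proj_def by (simp add: udiag_mult level_ind_sq)

lemma level_proj_orth: "unitary V \<Longrightarrow> e \<noteq> f \<Longrightarrow> level_proj V e0 e ** level_proj V e0 f = 0"
proof -
  assume V: "unitary V" and ef: "e \<noteq> f"
  have "(\<lambda>i. level_ind e0 e i * level_ind e0 f i) = (\<lambda>i. 0)" using ef by (auto simp: level_ind_def fun_eq_iff)
  thus ?thesis unfolding level_proj_def by (simp add: udiag_mult[OF V] udiag_zero)
qed

lemma hermitian_level_proj: "hermitian (level_proj V e0 e)"
  unfolding level_proj_def by (rule hermitian_udiag)

lemma orth_proj_level_proj: "unitary V \<Longrightarrow> orth_proj (level_proj V e0 e)"
  by (simp add: orth_proj_def level_proj_idem hermitian_level_proj)

lemma sum_level_proj: "unitary V \<Longrightarrow> (\<Sum>e\<in>diag_values e0. level_proj V e0 e) = mat 1"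
proof -
  assume V: "unitary V"
  have "(\<Sum>e\<in>diag_values e0. level_ind e0 e j) = 1" for j
  proof -
    have "(\<Sum>e\<in>diag_values e0. level_ind e0 e j) = (\<Sum>e\<in>diag_values e0. if e = complex_of_real (e0 j) then 1 else 0)"
      unfolding level_ind_def by (rule sum.cong) auto
    also have "\<dots> = 1" by (simp add: diag_values_def)
    finally show ?thesis .
  qed
  thus ?thesis unfolding level_proj_def by (simp add: udiag_sum udiag_one V)
qed

lemma range_level_proj:
  assumes V: "unitary V" and e: "e \<in> diag_values e0"
  shows "range ((*v) (level_proj V e0 e)) = {v. udiag V e0 *v v = e *s v}"
proof
  obtain i where ei: "e = complex_of_real (e0 i)" using e by (auto simp: diag_values_def)
  have Hpj: "udiag V e0 ** level_proj V e0 e = Re e *\<^sub>R level_proj V e0 e"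
    unfolding level_proj_def udiag_mult[OF V] udiag_scaleR
    by (rule arg_cong[where f="udiag V"]) (auto simp: fun_eq_iff level_ind_def ei)
  show "range ((*v) (level_proj V e0 e)) \<subseteq> {v. udiag V e0 *v v = e *s v}"
  proof clarify
    fix x
    have "udiag V e0 *v (level_proj V e0 e *v x) = (Re e *\<^sub>R level_proj V e0 e) *v x"
      by (simp add: matrix_vector_mul_assoc Hpj)
    also have "\<dots> = e *s (level_proj V e0 e *v x)"
      by (simp add: scaleR_mv ei)
    finally show "udiag V e0 *v (level_proj V e0 e *v x) = e *s (level_proj V e0 e *v x)" .
  qed
  show "{v. udiag V e0 *v v = e *s v} \<subseteq> range ((*v) (level_proj V e0 e))"
  proof clarify
    fix v assume v: "udiag V e0 *v v = e *s v"
    define w where "w = cadj V *v v"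
    have Vw: "V *v w = v" using V by (simp add: w_def matrix_vector_mul_assoc unitary_def)
    have "diag_mat (\<lambda>i. complex_of_real (e0 i)) *v w = (cadj V ** udiag V e0) *v v"
      by (simp add: udiag_left[OF V] w_def matrix_vector_mul_assoc)
    also have "\<dots> = e *s w" by (simp add: matrix_vector_mul_assoc[symmetric] v w_def mv_smult)
    finally have dw: "diag_mat (\<lambda>i. complex_of_real (e0 i)) *v w = e *s w" .
    have "complex_of_real (level_ind e0 e j) * w $ j = w $ j" for j
    proof -
      have "complex_of_real (e0 j) * w $ j = e * w $ j"
        using arg_cong[OF dw, of "\<lambda>u. u $ j"] by (simp add: diag_mat_mv)
      thus ?thesis by (auto simp: level_ind_def)
    qed
    hence "diag_mat (\<lambda>j. complex_of_real (level_ind e0 e j)) *v w = w"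
      by (simp add: vec_eq_iff diag_mat_mv)
    hence "level_proj V e0 e *v v = v"
      unfolding level_proj_def udiag_def
      by (simp add: matrix_vector_mul_assoc[symmetric] w_def[symmetric] Vw)
    thus "v \<in> range ((*v) (level_proj V e0 e))" by (metis rangeI)
  qed
qed

lemma eigenproj_udiag:
  assumes V: "unitary V" and e: "e \<in> diag_values e0"
  shows "eigenproj (udiag V e0) e = level_proj V e0 e"
  unfolding eigenproj_def
proof (rule the_equality)
  note R = range_level_proj[OF V e]
  show "orth_proj (level_proj V e0 e) \<and> range ((*v) (level_proj V e0 e)) = {v. udiag V e0 *v v = e *s v}"
    using orth_proj_level_proj[OF V] R by simp
  fix P assume P: "orth_proj P \<and> range ((*v) P) = {v. udiag V e0 *v v = e *s v}"
  show "P = level_proj V e0 e"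
    by (rule orth_proj_unique) (use P R orth_proj_level_proj[OF V] in auto)
qed

lemma matrix_vector_mult_sum_rdistrib: "finite S \<Longrightarrow> (\<Sum>e\<in>S. f e) *v x = (\<Sum>e\<in>S. f e *v (x::complex^'n::finite))"
  by (induction S rule: finite_induct) (auto simp: matrix_vector_mult_add_rdistrib)

lemma pinch_udiag_eq_sum:
  assumes V: "unitary V"
  shows "pinch (udiag V e0) X = (\<Sum>e\<in>diag_values e0. level_proj V e0 e ** X ** level_proj V e0 e)"
  unfolding pinch_def eigenvalues_udiag[OF V]
  by (rule sum.cong) (simp_all add: eigenproj_udiag[OF V])

context
  fixes V :: "'n::finite cmat" and e0 :: "'n \<Rightarrow> real"
  assumes V: "unitary V"
begin

abbreviation "Proj e \<equiv> level_proj V e0 e"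
abbreviation "Pinch X \<equiv> pinch (udiag V e0) X"

lemma pinch_scaleR: "Pinch (r *\<^sub>R X) = r *\<^sub>R Pinch X"
  unfolding pinch_udiag_eq_sum[OF V] by (simp add: scaleR_mult_left scaleR_mult_right scaleR_sum_right)

lemma bounded_linear_pinch: "bounded_linear Pinch"
  unfolding pinch_udiag_eq_sum[OF V]
  by (intro bounded_linear_sum bounded_linear_conj)

lemma trace_pinch: "trace (Pinch X) = trace X"
proof -
  have "trace (Pinch X) = (\<Sum>e\<in>diag_values e0. trace (Proj e ** X ** Proj e))"
    unfolding pinch_udiag_eq_sum[OF V] by (simp add: trace_sum)
  also have "\<dots> = (\<Sum>e\<in>diag_values e0. trace (Proj e ** X))"
    by (rule sum.cong) (simp_all add: trace_mul_sym[of "Proj _ ** X"] matrix_mul_assoc level_proj_idem[OF V])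
  also have "\<dots> = trace ((\<Sum>e\<in>diag_values e0. Proj e) ** X)"
    by (simp add: mult_sum_left trace_sum)
  finally show ?thesis by (simp add: sum_level_proj[OF V])
qed

lemma trace_pinch_mult: "trace (Pinch X ** Y) = trace (X ** Pinch Y)"
proof -
  have "trace (Pinch X ** Y) = (\<Sum>e\<in>diag_values e0. trace (Proj e ** X ** Proj e ** Y))"
    unfolding pinch_udiag_eq_sum[OF V] by (simp add: trace_sum mult_sum_left)
  also have "\<dots> = (\<Sum>e\<in>diag_values e0. trace (X ** (Proj e ** Y ** Proj e)))"
  proof (rule sum.cong)
    fix e
    have "trace (Proj e ** X ** Proj e ** Y) = trace (Proj e ** (X ** Proj e ** Y))" by (simp add: matrix_mul_assoc)
    also have "\<dots> = trace ((X ** Proj e ** Y) ** Proj e)" by (rule trace_mul_sym)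
    also have "\<dots> = trace (X ** (Proj e ** Y ** Proj e))" by (simp add: matrix_mul_assoc)
    finally show "trace (Proj e ** X ** Proj e ** Y) = trace (X ** (Proj e ** Y ** Proj e))" .
  qed simp
  also have "\<dots> = trace (X ** Pinch Y)"
    unfolding pinch_udiag_eq_sum[OF V] by (simp add: trace_sum mult_sum_right)
  finally show ?thesis .
qed

lemma hermitian_pinch: "hermitian X \<Longrightarrow> hermitian (Pinch X)"
  unfolding pinch_udiag_eq_sum[OF V]
  by (intro hermitian_sum) (auto simp: hermitian_def cadj_mult matrix_mul_assoc hermitian_level_proj[unfolded hermitian_def])

lemma level_proj_pinch: "Proj f ** Pinch X = Proj f ** X ** Proj f"
proof -
  have "Proj f ** Pinch X = (\<Sum>e\<in>diag_values e0. Proj f ** Proj e ** X ** Proj e)"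
    unfolding pinch_udiag_eq_sum[OF V] by (simp add: mult_sum_right matrix_mul_assoc)
  also have "\<dots> = (\<Sum>e\<in>diag_values e0. if e = f then Proj f ** X ** Proj f else 0)"
    by (rule sum.cong) (auto simp: level_proj_idem[OF V] level_proj_orth[OF V])
  also have "\<dots> = (if f \<in> diag_values e0 then Proj f ** X ** Proj f else 0)"
    by (simp add: sum.delta')
  also have "\<dots> = Proj f ** X ** Proj f"
  proof (cases "f \<in> diag_values e0")
    case False
    have "Proj f = 0"
    proof -
      have "level_ind e0 f = (\<lambda>i. 0)" using False by (auto simp: level_ind_def diag_values_def fun_eq_iff)
      thus ?thesis by (simp add: level_proj_def udiag_zero)
    qed
    thus ?thesis by simp
  qed simp
  finally show ?thesis .
qed

lemma pinch_level_proj: "Pinch X ** Proj f = Proj f ** X ** Proj f"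
proof -
  have "Pinch X ** Proj f = (\<Sum>e\<in>diag_values e0. Proj e ** X ** (Proj e ** Proj f))"
    unfolding pinch_udiag_eq_sum[OF V] by (simp add: mult_sum_left matrix_mul_assoc)
  also have "\<dots> = (\<Sum>e\<in>diag_values e0. if e = f then Proj f ** X ** Proj f else 0)"
    by (rule sum.cong) (auto simp: level_proj_idem[OF V] level_proj_orth[OF V])
  also have "\<dots> = (if f \<in> diag_values e0 then Proj f ** X ** Proj f else 0)"
    by (simp add: sum.delta')
  also have "\<dots> = Proj f ** X ** Proj f"
  proof (cases "f \<in> diag_values e0")
    case False
    have "Proj f = 0"
    proof -
      have "level_ind e0 f = (\<lambda>i. 0)" using False by (auto simp: level_ind_def diag_values_def fun_eq_iff)
      thus ?thesis by (simp add: level_proj_def udiag_zero)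
    qed
    thus ?thesis by simp
  qed simp
  finally show ?thesis .
qed

lemma level_proj_commute_pinch: "Proj f ** Pinch X = Pinch X ** Proj f"
  by (simp add: level_proj_pinch pinch_level_proj)

lemma pinch_eq_self_if_commute: "(\<And>e. Proj e ** Y = Y ** Proj e) \<Longrightarrow> Pinch Y = Y"
proof -
  assume c: "\<And>e. Proj e ** Y = Y ** Proj e"
  have "Pinch Y = (\<Sum>e\<in>diag_values e0. Proj e ** Y)"
    unfolding pinch_udiag_eq_sum[OF V]
  proof (rule sum.cong)
    fix e
    have "Proj e ** Y ** Proj e = Proj e ** (Y ** Proj e)" by (simp add: matrix_mul_assoc)
    also have "\<dots> = Proj e ** (Proj e ** Y)" by (simp add: c)
    also have "\<dots> = Proj e ** Y" by (simp add: matrix_mul_assoc level_proj_idem[OF V])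
    finally show "Proj e ** Y ** Proj e = Proj e ** Y" .
  qed simp
  also have "\<dots> = Y" by (simp add: mult_sum_left[symmetric] sum_level_proj[OF V])
  finally show ?thesis .
qed

lemma cinner_level_proj: "cinner x (Proj e *v y) = cinner (Proj e *v x) y"
  by (rule cinner_mv_herm[OF hermitian_level_proj])

lemma quad_form_pinch: "quad_form (Pinch X) x = (\<Sum>e\<in>diag_values e0. quad_form X (Proj e *v x))"
proof -
  have "cinner x (Pinch X *v x) = (\<Sum>e\<in>diag_values e0. cinner x ((Proj e ** X ** Proj e) *v x))"
    unfolding pinch_udiag_eq_sum[OF V] by (simp add: matrix_vector_mult_sum_rdistrib cinner_sum_right)
  also have "\<dots> = (\<Sum>e\<in>diag_values e0. cinner (Proj e *v x) (X *v (Proj e *v x)))"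
    by (rule sum.cong) (simp_all add: matrix_vector_mul_assoc[symmetric] cinner_level_proj)
  finally show ?thesis unfolding quad_form_def by (simp add: Re_sum)
qed

lemma norm_level_proj_sum: "(\<Sum>e\<in>diag_values e0. (norm (Proj e *v x))\<^sup>2) = (norm x)\<^sup>2"
proof -
  have "complex_of_real (\<Sum>e\<in>diag_values e0. (norm (Proj e *v x))\<^sup>2) = (\<Sum>e\<in>diag_values e0. cinner (Proj e *v x) (Proj e *v x))"
    by (simp add: cinner_self)
  also have "\<dots> = (\<Sum>e\<in>diag_values e0. cinner x (Proj e *v x))"
    by (rule sum.cong) (simp_all add: cinner_level_proj[symmetric] matrix_vector_mul_assoc level_proj_idem[OF V])
  also have "\<dots> = cinner x ((\<Sum>e\<in>diag_values e0. Proj e) *v x)"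
    by (simp add: matrix_vector_mult_sum_rdistrib cinner_sum_right)
  also have "\<dots> = complex_of_real ((norm x)\<^sup>2)" by (simp add: sum_level_proj[OF V] cinner_self)
  finally show ?thesis by (simp only: of_real_eq_iff)
qed

lemma quad_form_pinch_lower: "(\<And>y. a * (norm y)\<^sup>2 \<le> quad_form X y) \<Longrightarrow> a * (norm x)\<^sup>2 \<le> quad_form (Pinch X) x"
proof -
  assume h: "\<And>y. a * (norm y)\<^sup>2 \<le> quad_form X y"
  have "a * (norm x)\<^sup>2 = (\<Sum>e\<in>diag_values e0. a * (norm (Proj e *v x))\<^sup>2)"
    by (simp add: sum_distrib_left[symmetric] norm_level_proj_sum)
  also have "\<dots> \<le> (\<Sum>e\<in>diag_values e0. quad_form X (Proj e *v x))" by (intro sum_mono h)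
  finally show ?thesis by (simp add: quad_form_pinch)
qed

lemma quad_form_pinch_upper: "(\<And>y. quad_form X y \<le> a * (norm y)\<^sup>2) \<Longrightarrow> quad_form (Pinch X) x \<le> a * (norm x)\<^sup>2"
proof -
  assume h: "\<And>y. quad_form X y \<le> a * (norm y)\<^sup>2"
  have "quad_form (Pinch X) x = (\<Sum>e\<in>diag_values e0. quad_form X (Proj e *v x))" by (simp add: quad_form_pinch)
  also have "\<dots> \<le> (\<Sum>e\<in>diag_values e0. a * (norm (Proj e *v x))\<^sup>2)" by (intro sum_mono h)
  also have "\<dots> = a * (norm x)\<^sup>2"
    by (simp add: sum_distrib_left[symmetric] norm_level_proj_sum)
  finally show ?thesis .
qed

end

lemma cinner_unitary: "unitary U \<Longrightarrow> cinner (cadj U *v x) (cadj U *v y) = cinner x y"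
  by (simp add: cinner_mv matrix_vector_mul_assoc unitary_def)

lemma norm_cadj_unitary_mv: "unitary U \<Longrightarrow> norm (cadj U *v x) = norm x"
proof -
  assume U: "unitary U"
  have "cinner (cadj U *v x) (cadj U *v x) = cinner x x" by (rule cinner_unitary[OF U])
  hence "complex_of_real ((norm (cadj U *v x))\<^sup>2) = complex_of_real ((norm x)\<^sup>2)"
    unfolding cinner_self .
  hence "(norm (cadj U *v x))\<^sup>2 = (norm x)\<^sup>2" by (simp only: of_real_eq_iff)
  thus ?thesis by (simp add: power2_eq_iff_nonneg)
qed

lemma quad_form_udiag: "unitary U \<Longrightarrow> quad_form (udiag U d) x = (\<Sum>i\<in>UNIV. d i * (norm ((cadj U *v x) $ i))\<^sup>2)"
proof -
  assume U: "unitary U"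
  define w where "w = cadj U *v x"
  have "cinner x (udiag U d *v x) = cinner w (diag_mat (\<lambda>i. complex_of_real (d i)) *v w)"
    unfolding udiag_def w_def by (simp add: cinner_mv matrix_vector_mul_assoc[symmetric])
  also have "\<dots> = (\<Sum>i\<in>UNIV. complex_of_real (d i * (norm (w $ i))\<^sup>2))"
    unfolding cinner_def diag_mat_mv
  proof (rule sum.cong)
    fix i
    show "cnj (w $ i) * (complex_of_real (d i) * w $ i) = complex_of_real (d i * (norm (w $ i))\<^sup>2)"
      by (subst of_real_mult, subst complex_norm_square) (simp add: ac_simps)
  qed simp
  finally show ?thesis unfolding quad_form_def w_def by (simp add: Re_sum)
qed

lemma quad_form_udiag_lower: "unitary U \<Longrightarrow> (\<And>i. a \<le> d i) \<Longrightarrow> a * (norm x)\<^sup>2 \<le> quad_form (udiag U d) x"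
proof -
  assume U: "unitary U" and h: "\<And>i. a \<le> d i"
  have "a * (norm x)\<^sup>2 = (\<Sum>i\<in>UNIV. a * (norm ((cadj U *v x) $ i))\<^sup>2)"
    by (simp add: sum_distrib_left[symmetric] norm_vec_sq[symmetric] norm_cadj_unitary_mv[OF U])
  also have "\<dots> \<le> (\<Sum>i\<in>UNIV. d i * (norm ((cadj U *v x) $ i))\<^sup>2)"
    by (intro sum_mono mult_right_mono h) simp
  finally show ?thesis by (simp add: quad_form_udiag[OF U])
qed

lemma quad_form_udiag_upper: "unitary U \<Longrightarrow> (\<And>i. d i \<le> a) \<Longrightarrow> quad_form (udiag U d) x \<le> a * (norm x)\<^sup>2"
proof -
  assume U: "unitary U" and h: "\<And>i. d i \<le> a"
  have "quad_form (udiag U d) x = (\<Sum>i\<in>UNIV. d i * (norm ((cadj U *v x) $ i))\<^sup>2)" by (simp add: quad_form_udiag[OF U])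
  also have "\<dots> \<le> (\<Sum>i\<in>UNIV. a * (norm ((cadj U *v x) $ i))\<^sup>2)"
    by (intro sum_mono mult_right_mono h) simp
  also have "\<dots> = a * (norm x)\<^sup>2"
    by (simp add: sum_distrib_left[symmetric] norm_vec_sq[symmetric] norm_cadj_unitary_mv[OF U])
  finally show ?thesis .
qed

lemma udiag_eigenvalue_quad_form:
  assumes U: "unitary U"
  shows "\<exists>x. norm x = 1 \<and> quad_form (udiag U d) x = d i"
proof -
  define x where "x = U *v axis i 1"
  have cx: "cadj U *v x = axis i 1" using U by (simp add: x_def matrix_vector_mul_assoc unitary_def)
  have "norm x = norm (cadj U *v x)" by (simp add: norm_cadj_unitary_mv[OF U])
  also have "\<dots> = 1"
  proof -
    have "(norm (axis i (1::complex)))\<^sup>2 = (\<Sum>j\<in>UNIV. if j = i then 1 else 0)"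
      unfolding norm_vec_sq by (rule sum.cong) (auto simp: axis_def)
    hence "(norm (axis i (1::complex)))\<^sup>2 = 1" by simp
    thus ?thesis by (simp add: cx power2_eq_1_iff)
  qed
  finally have "norm x = 1" .
  moreover have "quad_form (udiag U d) x = d i"
  proof -
    have "quad_form (udiag U d) x = (\<Sum>j\<in>UNIV. if j = i then d i else 0)"
      unfolding quad_form_udiag[OF U] cx by (rule sum.cong) (auto simp: axis_def)
    thus ?thesis by simp
  qed
  ultimately show ?thesis by blast
qed

lemma udiag_ge_if_quad_form_ge:
  "unitary U \<Longrightarrow> (\<And>x. a * (norm x)\<^sup>2 \<le> quad_form (udiag U d) x) \<Longrightarrow> a \<le> d i"
proof -
  assume U: "unitary U" and h: "\<And>x. a * (norm x)\<^sup>2 \<le> quad_form (udiag U d) x"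
  obtain x where x: "norm x = 1" "quad_form (udiag U d) x = d i" using udiag_eigenvalue_quad_form[OF U] by blast
  show ?thesis using h[of x] x by simp
qed

lemma udiag_le_if_quad_form_le:
  "unitary U \<Longrightarrow> (\<And>x. quad_form (udiag U d) x \<le> a * (norm x)\<^sup>2) \<Longrightarrow> d i \<le> a"
proof -
  assume U: "unitary U" and h: "\<And>x. quad_form (udiag U d) x \<le> a * (norm x)\<^sup>2"
  obtain x where x: "norm x = 1" "quad_form (udiag U d) x = d i" using udiag_eigenvalue_quad_form[OF U] by blast
  show ?thesis using h[of x] x by simp
qed

lemma udiag_conj: "unitary R \<Longrightarrow> R ** udiag W q ** cadj R = udiag (R ** W) q"
  unfolding udiag_def by (simp add: cadj_mult matrix_mul_assoc)

lemma mlog_udiag_commute: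
  assumes R: "unitary R" and W: "unitary W" and q: "\<And>i. q i > 0"
    and c: "R ** udiag W q = udiag W q ** R"
  shows "R ** mlog (udiag W q) = mlog (udiag W q) ** R"
proof -
  define L where "L = mlog (udiag W q)"
  have L: "L = udiag W (\<lambda>i. ln (q i))" unfolding L_def by (rule mlog_udiag[OF W q])
  have RW: "unitary (R ** W)" by (rule unitary_mult[OF R W])
  have A: "R ** udiag W q ** cadj R = udiag W q"
    using c R unfolding unitary_def by (metis matrix_mul_assoc matrix_mul_rid)
  have "mlog (udiag W q) = R ** L ** cadj R"
  proof (rule mlog_eqI)
    show "hermitian (R ** L ** cadj R)" unfolding L by (rule hermitian_conj[OF hermitian_udiag])
    have "mexp (R ** L ** cadj R) = udiag (R ** W) q"
      unfolding L udiag_conj[OF R] mexp_udiag[OF RW] using q by simp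
    also have "\<dots> = udiag W q" using A udiag_conj[OF R] by simp
    finally show "mexp (R ** L ** cadj R) = udiag W q" .
  qed
  hence "L = R ** L ** cadj R" by (simp add: L_def)
  hence "L ** R = R ** L ** (cadj R ** R)" by (simp add: matrix_mul_assoc)
  thus ?thesis using R by (simp add: unitary_def L_def)
qed

text \<open>The reflection R = 1 - 2 P in a spectral projection P of H0 is a unitary commuting with
  the pinched matrix, hence with its logarithm by uniqueness of the Hermitian logarithm; so P
  commutes with it too.\<close>
lemma pinch_mlog_of_pinched:
  assumes V: "unitary V" and W: "unitary W" and q: "\<And>i. q i > 0"
    and A: "udiag W q = pinch (udiag V e0) X"
  shows "pinch (udiag V e0) (mlog (udiag W q)) = mlog (udiag W q)"
proof (rule pinch_eq_self_if_commute[OF V])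
  fix e
  define P where "P = level_proj V e0 e"
  define R where "R = mat 1 - 2 *\<^sub>R P"
  have Ph: "cadj P = P" unfolding P_def using hermitian_level_proj[of V e0 e] by (simp add: hermitian_def)
  have Proj: "P ** P = P" unfolding P_def by (rule level_proj_idem[OF V])
  have RR: "R ** R = mat 1"
    unfolding R_def by (simp add: mult_diff_left mult_diff_right scaleR_mult_left scaleR_mult_right Proj) (simp add: scaleR_diff_right flip: scaleR_left_diff_distrib)
  have R: "unitary R"
    unfolding unitary_def using RR by (simp add: R_def cadj_diff cadj_scaleR Ph)
  have cP: "P ** udiag W q = udiag W q ** P" unfolding A P_def by (rule level_proj_commute_pinch[OF V])
  have "R ** udiag W q = udiag W q ** R"
    unfolding R_def by (simp add: mult_diff_left mult_diff_right scaleR_mult_left scaleR_mult_right cP)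
  from mlog_udiag_commute[OF R W q this]
  have "R ** mlog (udiag W q) = mlog (udiag W q) ** R" .
  thus "level_proj V e0 e ** mlog (udiag W q) = mlog (udiag W q) ** level_proj V e0 e"
    unfolding R_def P_def[symmetric]
    by (simp add: mult_diff_left mult_diff_right scaleR_mult_left scaleR_mult_right)
qed

section \<open>Klein's inequality and entropy increase under pinching\<close>

lemma unitary_row: "unitary Y \<Longrightarrow> (\<Sum>j\<in>UNIV. (norm (Y$i$j))\<^sup>2) = 1"
proof -
  assume Y: "unitary Y"
  have "(Y ** cadj Y) $ i $ i = 1" using Y by (simp add: unitary_def mat_nth)
  hence "(\<Sum>j\<in>UNIV. Y$i$j * cnj (Y$i$j)) = 1" by (simp add: mmult_nth)
  moreover have "complex_of_real (\<Sum>j\<in>UNIV. (norm (Y$i$j))\<^sup>2) = (\<Sum>j\<in>UNIV. Y$i$j * cnj (Y$i$j))"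
    by (simp only: of_real_sum complex_norm_square)
  ultimately have "complex_of_real (\<Sum>j\<in>UNIV. (norm (Y$i$j))\<^sup>2) = complex_of_real 1" by simp
  thus ?thesis by (simp only: of_real_eq_iff)
qed

lemma unitary_col: "unitary Y \<Longrightarrow> (\<Sum>i\<in>UNIV. (norm (Y$i$j))\<^sup>2) = 1"
proof -
  assume Y: "unitary Y"
  have "(cadj Y ** Y) $ j $ j = 1" using Y by (simp add: unitary_def mat_nth)
  hence "(\<Sum>i\<in>UNIV. cnj (Y$i$j) * Y$i$j) = 1" by (simp add: mmult_nth)
  moreover have "complex_of_real (\<Sum>i\<in>UNIV. (norm (Y$i$j))\<^sup>2) = (\<Sum>i\<in>UNIV. cnj (Y$i$j) * Y$i$j)"
    by (simp only: of_real_sum complex_norm_square mult.commute)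
  ultimately have "complex_of_real (\<Sum>i\<in>UNIV. (norm (Y$i$j))\<^sup>2) = complex_of_real 1" by simp
  thus ?thesis by (simp only: of_real_eq_iff)
qed

lemma trace_udiag_udiag:
  assumes U: "unitary U" and W: "unitary W"
  shows "trace (udiag U p ** udiag W g) =
    complex_of_real (\<Sum>i\<in>UNIV. \<Sum>j\<in>UNIV. p i * g j * (norm ((cadj U ** W)$i$j))\<^sup>2)"
proof -
  define Y where "Y = cadj U ** W"
  define P where "P = diag_mat (\<lambda>i. complex_of_real (p i))"
  define G where "G = diag_mat (\<lambda>i. complex_of_real (g i))"
  have "trace (udiag U p ** udiag W g) = trace (U ** (P ** cadj U ** W ** G ** cadj W))"
    by (simp add: udiag_def P_def G_def matrix_mul_assoc)
  also have "\<dots> = trace ((P ** cadj U ** W ** G ** cadj W) ** U)" by (rule trace_mul_sym)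
  also have "\<dots> = trace (P ** Y ** G ** cadj Y)"
    by (simp add: Y_def cadj_mult matrix_mul_assoc)
  also have "\<dots> = (\<Sum>i\<in>UNIV. \<Sum>j\<in>UNIV. complex_of_real (p i * g j * (norm (Y$i$j))\<^sup>2))"
    unfolding trace_def
  proof (rule sum.cong)
    fix i
    show "(P ** Y ** G ** cadj Y) $ i $ i = (\<Sum>j\<in>UNIV. complex_of_real (p i * g j * (norm (Y$i$j))\<^sup>2))"
      unfolding mmult_nth[of "P ** Y ** G"]
    proof (rule sum.cong)
      fix j
      have "(P ** Y ** G) $ i $ j = complex_of_real (p i) * Y$i$j * complex_of_real (g j)"
        unfolding G_def P_def diag_mat_mult_right by (simp add: diag_mat_mult_left)
      thus "(P ** Y ** G) $ i $ j * cadj Y $ j $ i = complex_of_real (p i * g j * (norm (Y$i$j))\<^sup>2)"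
        unfolding cadj_nth of_real_mult complex_norm_square by (simp add: mult_ac)
    qed simp
  qed simp
  finally show ?thesis by (simp add: Y_def)
qed

lemma pinch_udiag_spectrum_bounds:
  assumes V: "unitary V" and U: "unitary U" and d: "\<And>i. a \<le> d i \<and> d i \<le> B"
  shows "\<exists>W q. unitary W \<and> pinch (udiag V e0) (udiag U d) = udiag W q \<and> (\<forall>i. a \<le> q i \<and> q i \<le> B)"
proof -
  have "hermitian (pinch (udiag V e0) (udiag U d))"
    by (intro hermitian_pinch[OF V] hermitian_udiag)
  then obtain W q where W: "unitary W" and q: "pinch (udiag V e0) (udiag U d) = udiag W q"
    using hermitian_eq_udiag by blast
  have "a * (norm x)\<^sup>2 \<le> quad_form (udiag W q) x" for x
    unfolding q[symmetric]
    by (rule quad_form_pinch_lower[OF V], rule quad_form_udiag_lower[OF U]) (use d in auto)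
  moreover have "quad_form (udiag W q) x \<le> B * (norm x)\<^sup>2" for x
    unfolding q[symmetric]
    by (rule quad_form_pinch_upper[OF V], rule quad_form_udiag_upper[OF U]) (use d in auto)
  ultimately have "a \<le> q i \<and> q i \<le> B" for i
    using udiag_ge_if_quad_form_ge[OF W] udiag_le_if_quad_form_le[OF W] by blast
  with W q show ?thesis by blast
qed

lemma pinch_udiag_positive:
  assumes H0: "hermitian H0" and U: "unitary U" and p: "\<And>i. p i > 0"
  shows "\<exists>W q. unitary W \<and> pinch H0 (udiag U p) = udiag W q \<and> (\<forall>i. q i > 0)"
proof -
  obtain V e0 where V: "unitary V" and H0: "H0 = udiag V e0" using hermitian_eq_udiag[OF H0] by blast
  have "Min (range p) \<le> p i \<and> p i \<le> Max (range p)" for i by simp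
  then obtain W q where "unitary W" "pinch H0 (udiag U p) = udiag W q"
    and "\<And>i. Min (range p) \<le> q i"
    using pinch_udiag_spectrum_bounds[OF V U] unfolding H0 by blast
  moreover have "Min (range p) > 0" using p by simp
  ultimately show ?thesis by (meson less_le_trans)
qed

lemma doubly_stochastic_relative_entropy_nonneg:
  fixes w :: "'n::finite \<Rightarrow> 'n \<Rightarrow> real"
  assumes w: "\<And>i j. 0 \<le> w i j" and rows: "\<And>i. (\<Sum>j\<in>UNIV. w i j) = 1"
    and cols: "\<And>j. (\<Sum>i\<in>UNIV. w i j) = 1"
    and p: "\<And>i. p i > 0" and q: "\<And>i. q i > 0" and s: "(\<Sum>i\<in>UNIV. p i) = (\<Sum>i\<in>UNIV. q i)"
  shows "0 \<le> (\<Sum>i\<in>UNIV. \<Sum>j\<in>UNIV. w i j * (p i * (ln (p i) - ln (q j))))"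
proof -
  have "(\<Sum>i\<in>UNIV. \<Sum>j\<in>UNIV. w i j * (p i - q j))
      = (\<Sum>i\<in>UNIV. \<Sum>j\<in>UNIV. p i * w i j) - (\<Sum>i\<in>UNIV. \<Sum>j\<in>UNIV. q j * w i j)"
    by (simp add: sum_subtractf[symmetric] algebra_simps)
  also have "(\<Sum>i\<in>UNIV. \<Sum>j\<in>UNIV. q j * w i j) = (\<Sum>j\<in>UNIV. \<Sum>i\<in>UNIV. q j * w i j)"
    by (rule sum.swap)
  also have "(\<Sum>i\<in>UNIV. \<Sum>j\<in>UNIV. p i * w i j) - (\<Sum>j\<in>UNIV. \<Sum>i\<in>UNIV. q j * w i j)
      = (\<Sum>i\<in>UNIV. p i * (\<Sum>j\<in>UNIV. w i j)) - (\<Sum>j\<in>UNIV. q j * (\<Sum>i\<in>UNIV. w i j))"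
    by (simp add: sum_distrib_left)
  also have "\<dots> = 0" by (simp add: rows cols s)
  finally have "0 = (\<Sum>i\<in>UNIV. \<Sum>j\<in>UNIV. w i j * (p i - q j))" by simp
  also have "\<dots> \<le> (\<Sum>i\<in>UNIV. \<Sum>j\<in>UNIV. w i j * (p i * (ln (p i) - ln (q j))))"
  proof (intro sum_mono mult_left_mono w)
    fix i j
    have "ln (q j / p i) \<le> q j / p i - 1" using p[of i] q[of j] by (intro ln_le_minus_one) simp
    hence "p i * (ln (q j) - ln (p i)) \<le> p i * (q j / p i - 1)"
      using p[of i] q[of j] by (intro mult_left_mono) (auto simp: ln_div)
    also have "p i * (q j / p i - 1) = q j - p i" using p[of i] by (simp add: field_simps)
    finally show "p i - q j \<le> p i * (ln (p i) - ln (q j))" by (simp add: right_diff_distrib)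
  qed
  finally show ?thesis .
qed

lemma klein_inequality:
  assumes U: "unitary U" and W: "unitary W" and p: "\<And>i. p i > 0" and q: "\<And>i. q i > 0"
    and s: "(\<Sum>i\<in>UNIV. p i) = (\<Sum>i\<in>UNIV. q i)"
  shows "\<exists>x\<ge>0. trace (udiag U p ** mlog (udiag U p)) - trace (udiag U p ** mlog (udiag W q))
     = complex_of_real x"
proof -
  define Y where "Y = cadj U ** W"
  have Y: "unitary Y" unfolding Y_def by (intro unitary_mult unitary_cadj U W)
  define w where "w i j = (norm (Y$i$j))\<^sup>2" for i j
  have "trace (udiag U p ** mlog (udiag U p)) = complex_of_real (\<Sum>i\<in>UNIV. p i * ln (p i))"
    by (simp add: mlog_udiag[OF U p] udiag_mult[OF U] trace_udiag[OF U])
  also have "(\<Sum>i\<in>UNIV. p i * ln (p i)) = (\<Sum>i\<in>UNIV. \<Sum>j\<in>UNIV. w i j * (p i * ln (p i)))"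
    by (simp add: sum_distrib_right[symmetric] w_def unitary_row[OF Y])
  finally have t1: "trace (udiag U p ** mlog (udiag U p))
      = complex_of_real (\<Sum>i\<in>UNIV. \<Sum>j\<in>UNIV. w i j * (p i * ln (p i)))" .
  have t2: "trace (udiag U p ** mlog (udiag W q))
      = complex_of_real (\<Sum>i\<in>UNIV. \<Sum>j\<in>UNIV. w i j * (p i * ln (q j)))"
    unfolding mlog_udiag[OF W q] trace_udiag_udiag[OF U W] Y_def[symmetric] w_def
    by (simp add: mult_ac)
  define x where "x = (\<Sum>i\<in>UNIV. \<Sum>j\<in>UNIV. w i j * (p i * (ln (p i) - ln (q j))))"
  have "0 \<le> x" unfolding x_def
    by (rule doubly_stochastic_relative_entropy_nonneg[OF _ _ _ p q s])
       (simp_all add: w_def unitary_row[OF Y] unitary_col[OF Y])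
  moreover have "(\<Sum>i\<in>UNIV. \<Sum>j\<in>UNIV. w i j * (p i * ln (p i))) - (\<Sum>i\<in>UNIV. \<Sum>j\<in>UNIV. w i j * (p i * ln (q j))) = x"
    unfolding x_def by (simp add: sum_subtractf[symmetric] algebra_simps)
  hence "trace (udiag U p ** mlog (udiag U p)) - trace (udiag U p ** mlog (udiag W q)) = complex_of_real x"
    unfolding t1 t2 of_real_diff[symmetric] by (simp only:)
  ultimately show ?thesis by blast
qed

lemma pinch_entropy_increase:
  assumes H0: "hermitian H0" and U: "unitary U" and p: "\<And>i. p i > 0"
  defines "\<rho> \<equiv> udiag U p"
  shows "\<exists>x\<ge>0. trace (\<rho> ** mlog \<rho>) - trace (pinch H0 \<rho> ** mlog (pinch H0 \<rho>)) = complex_of_real x"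
proof -
  obtain V e0 where V: "unitary V" and H0: "H0 = udiag V e0" using hermitian_eq_udiag[OF H0] by blast
  obtain W q where W: "unitary W" and q: "pinch H0 \<rho> = udiag W q" and qpos: "\<And>i. q i > 0"
    using pinch_udiag_positive[where p = p, OF assms(1) U p] unfolding \<rho>_def by blast
  have "trace (udiag W q) = trace (udiag U p)"
    using trace_pinch[OF V, of e0 "udiag U p"] q unfolding H0 \<rho>_def by simp
  hence sums: "(\<Sum>i\<in>UNIV. p i) = (\<Sum>i\<in>UNIV. q i)"
    by (metis trace_udiag[OF W] trace_udiag[OF U] of_real_eq_iff)
  have "trace (pinch H0 \<rho> ** mlog (pinch H0 \<rho>)) = trace (\<rho> ** pinch H0 (mlog (udiag W q)))"
    using q trace_pinch_mult[OF V, of e0 \<rho> "mlog (udiag W q)"] unfolding H0 by simp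
  also have "pinch H0 (mlog (udiag W q)) = mlog (udiag W q)"
    unfolding H0 by (rule pinch_mlog_of_pinched[OF V W qpos q[unfolded H0, symmetric]])
  finally show ?thesis
    using klein_inequality[OF U W p qpos sums] unfolding q \<rho>_def by simp
qed

section \<open>Differentiating the matrix logarithm\<close>

lemma norm_mat_sq: "(norm (A::'n::finite cmat))\<^sup>2 = (\<Sum>i\<in>UNIV. \<Sum>j\<in>UNIV. (norm (A$i$j))\<^sup>2)"
  by (simp add: norm_vec_def L2_set_def sum_nonneg)

lemma norm_cadj: "norm (cadj A) = norm (A::'n::finite cmat)"
proof -
  have "(norm (cadj A))\<^sup>2 = (norm A)\<^sup>2"
    unfolding norm_mat_sq cadj_nth complex_mod_cnj by (rule sum.swap)
  thus ?thesis by (simp add: power2_eq_iff_nonneg)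
qed

lemma norm_mult_left_bound:
  assumes r: "r \<ge> 0" and Y: "\<And>v. norm ((Y::'n::finite cmat) *v v) \<le> r * norm v"
  shows "norm (Y ** Z) \<le> r * norm (Z::'n::finite cmat)"
proof -
  define col where "col j = (\<chi> i. Z $ i $ j)" for j
  have e: "(Y ** Z) $ i $ j = (Y *v col j) $ i" for i j
    by (simp add: mmult_nth mvmult_nth col_def)
  have "(norm (Y ** Z))\<^sup>2 = (\<Sum>j\<in>UNIV. (norm (Y *v col j))\<^sup>2)"
    unfolding norm_mat_sq e norm_vec_sq by (rule sum.swap)
  also have "\<dots> \<le> (\<Sum>j\<in>UNIV. (r * norm (col j))\<^sup>2)"
    by (intro sum_mono power_mono Y) simp
  also have "\<dots> = r\<^sup>2 * (\<Sum>j\<in>UNIV. (norm (col j))\<^sup>2)"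
    by (simp add: power_mult_distrib sum_distrib_left)
  also have "(\<Sum>j\<in>UNIV. (norm (col j))\<^sup>2) = (norm Z)\<^sup>2"
    unfolding norm_mat_sq norm_vec_sq col_def vec_lambda_beta by (rule sum.swap)
  finally have "(norm (Y ** Z))\<^sup>2 \<le> (r * norm Z)\<^sup>2" by (simp add: power_mult_distrib)
  thus ?thesis using r by (simp add: power2_le_iff_abs_le)
qed

lemma norm_mult_right_bound:
  assumes r: "r \<ge> 0" and Y: "\<And>v. norm (cadj (Y::'n::finite cmat) *v v) \<le> r * norm v"
  shows "norm (Z ** Y) \<le> r * norm (Z::'n::finite cmat)"
proof -
  have "norm (Z ** Y) = norm (cadj Y ** cadj Z)" by (metis cadj_mult norm_cadj)
  also have "\<dots> \<le> r * norm (cadj Z)" by (rule norm_mult_left_bound[OF r Y])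
  finally show ?thesis by (simp add: norm_cadj)
qed

lemma norm_unitary_mv: "unitary U \<Longrightarrow> norm (U *v x) = norm x"
  using norm_cadj_unitary_mv[of "cadj U" x] unitary_cadj[of U] by simp

lemma udiag_mv_bound:
  assumes U: "unitary U" and r: "\<And>i. \<bar>d i\<bar> \<le> r"
  shows "norm (udiag U d *v v) \<le> r * norm v"
proof -
  define w where "w = cadj U *v v"
  have "udiag U d *v v = U *v (diag_mat (\<lambda>i. complex_of_real (d i)) *v w)"
    by (simp add: udiag_def w_def matrix_vector_mul_assoc matrix_mul_assoc)
  hence "norm (udiag U d *v v) = norm (diag_mat (\<lambda>i. complex_of_real (d i)) *v w)"
    by (simp add: norm_unitary_mv[OF U])
  also have "\<dots> \<le> r * norm w"
  proof -
    have r0: "r \<ge> 0" using r[of undefined] by linarith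
    have "(norm (diag_mat (\<lambda>i. complex_of_real (d i)) *v w))\<^sup>2 = (\<Sum>i\<in>UNIV. (d i)\<^sup>2 * (norm (w $ i))\<^sup>2)"
      unfolding norm_vec_sq diag_mat_mv by (simp add: norm_mult power_mult_distrib)
    also have "\<dots> \<le> (\<Sum>i\<in>UNIV. r\<^sup>2 * (norm (w $ i))\<^sup>2)"
      by (intro sum_mono mult_right_mono) (use r in \<open>auto simp: power2_le_iff_abs_le r0\<close>)
    also have "\<dots> = (r * norm w)\<^sup>2" by (simp add: norm_vec_sq power_mult_distrib sum_distrib_left)
    finally show ?thesis using r0 by (simp add: power2_le_iff_abs_le)
  qed
  also have "norm w = norm v" by (simp add: w_def norm_cadj_unitary_mv[OF U])
  finally show ?thesis .
qed

text \<open>The norm on matrices is the Frobenius norm; mult_bounded X r bounds instead the operator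
  norm of X by r, which is what makes the logarithm series converge when r < 1.\<close>
definition mult_bounded :: "'n::finite cmat \<Rightarrow> real \<Rightarrow> bool" where
  "mult_bounded X r \<longleftrightarrow> (\<forall>Z. norm (X ** Z) \<le> r * norm Z \<and> norm (Z ** X) \<le> r * norm Z)"

lemma udiag_mult_bounded:
  fixes U :: "'n::finite cmat"
  assumes U: "unitary U" and r: "\<And>i. \<bar>d i\<bar> \<le> r"
  shows "mult_bounded (udiag U d) r"
proof -
  have r0: "r \<ge> 0" using r[of undefined] by linarith
  have adj: "cadj (udiag U d) = udiag U d" using hermitian_udiag[of U d] by (simp add: hermitian_def)
  show ?thesis unfolding mult_bounded_def
  proof (intro allI conjI)
    fix Z :: "'n cmat"
    show "norm (udiag U d ** Z) \<le> r * norm Z"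
      by (rule norm_mult_left_bound[OF r0 udiag_mv_bound[OF U r]])
    show "norm (Z ** udiag U d) \<le> r * norm Z"
      by (rule norm_mult_right_bound[OF r0]) (simp add: adj udiag_mv_bound[OF U r])
  qed
qed

lemma mpow_udiag: "unitary U \<Longrightarrow> mpow (udiag U d) k = udiag U (\<lambda>i. d i ^ k)"
  unfolding udiag_def by (simp add: mpow_conj mpow_diag_mat)

lemma series_udiag:
  assumes U: "unitary U" and s: "\<And>i. (\<lambda>k. F k i) sums G i"
  shows "(\<lambda>k. udiag U (F k)) sums udiag U G"
proof -
  have "(\<lambda>k. diag_mat (\<lambda>i. complex_of_real (F k i))) sums diag_mat (\<lambda>i. complex_of_real (G i))"
  proof (rule sums_matrix_entrywise)
    fix i j show "(\<lambda>k. diag_mat (\<lambda>i. complex_of_real (F k i)) $ i $ j) sums (diag_mat (\<lambda>i. complex_of_real (G i)) $ i $ j)"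
      by (cases "i = j") (simp_all add: diag_mat_nth sums_of_real s)
  qed
  from bounded_linear.sums[OF bounded_linear_conj[of U "cadj U"] this]
  show ?thesis unfolding udiag_def .
qed

lemma ln_one_minus_sums:
  fixes x :: real assumes "\<bar>x\<bar> < 1"
  shows "(\<lambda>k. (1 / real (Suc k)) * x ^ Suc k) sums (- ln (1 - x))"
proof -
  have "(\<lambda>n. - (x ^ n) / of_nat n) sums ln (1 - x)"
    using ln_series'[of "- x"] assms by simp
  hence "(\<lambda>n. x ^ n / of_nat n) sums (- ln (1 - x))"
    using sums_minus by fastforce
  thus ?thesis by (subst sums_Suc_iff) simp
qed

definition log_series :: "'n::finite cmat \<Rightarrow> 'n cmat" where
  "log_series X = (\<Sum>k. (1 / real (Suc k)) *\<^sub>R mpow X (Suc k))"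

lemma mlog_udiag_eq_log_series:
  assumes W: "unitary W" and c: "c > 0" and q: "\<And>i. 0 < q i \<and> q i \<le> c"
  shows "mlog (udiag W q) = ln c *\<^sub>R mat 1 - log_series (mat 1 - (1/c) *\<^sub>R udiag W q)"
proof -
  define xi where "xi i = 1 - q i / c" for i
  have xi: "\<bar>xi i\<bar> < 1" for i using q[of i] c by (auto simp: xi_def field_simps)
  have X: "mat 1 - (1/c) *\<^sub>R udiag W q = udiag W xi"
    unfolding udiag_one[OF W, symmetric] udiag_scaleR udiag_diff xi_def by simp
  have "(\<lambda>k. udiag W (\<lambda>i. (1 / real (Suc k)) * xi i ^ Suc k)) sums udiag W (\<lambda>i. - ln (1 - xi i))"
    by (rule series_udiag[OF W ln_one_minus_sums[OF xi]])
  hence "(\<lambda>k. (1 / real (Suc k)) *\<^sub>R mpow (udiag W xi) (Suc k)) sums udiag W (\<lambda>i. - ln (1 - xi i))"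
    by (simp only: mpow_udiag[OF W] udiag_scaleR)
  hence ls: "log_series (udiag W xi) = udiag W (\<lambda>i. - ln (1 - xi i))"
    unfolding log_series_def by (rule sums_unique[symmetric])
  have "mlog (udiag W q) = udiag W (\<lambda>i. ln (q i))" by (rule mlog_udiag[OF W]) (use q in auto)
  also have "\<dots> = ln c *\<^sub>R mat 1 - udiag W (\<lambda>i. - ln (1 - xi i))"
  proof -
    have "ln (q i) = ln c * 1 - - ln (1 - xi i)" for i
      using q[of i] c by (simp add: xi_def ln_div)
    thus ?thesis unfolding udiag_one[OF W, symmetric] udiag_scaleR udiag_diff by simp
  qed
  finally show ?thesis unfolding X ls .
qed

lemma bilinear_mmult: "bounded_bilinear (\<lambda>A B. (A::'n::finite cmat) ** (B::'n cmat))"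
proof -
  have "bilinear (\<lambda>A B. (A::'n::finite cmat) ** (B::'n cmat))"
    unfolding bilinear_def
    by (auto intro!: linearI simp: mult_add_left matrix_add_ldistrib scaleR_mult_left scaleR_mult_right)
  thus ?thesis by (simp add: bilinear_conv_bounded_bilinear)
qed

lemma bounded_linear_trace_mult: "bounded_linear (\<lambda>A. trace (Y ** (A::'n::finite cmat)))"
proof -
  have "linear (\<lambda>A. trace (Y ** (A::'n::finite cmat)))"
    by (rule linearI) (simp_all add: matrix_add_ldistrib trace_add scaleR_mult_right trace_scaleR)
  thus ?thesis by (simp add: linear_conv_bounded_linear)
qed

fun mpow_diff :: "'n::finite cmat \<Rightarrow> 'n cmat \<Rightarrow> nat \<Rightarrow> 'n cmat" where
  "mpow_diff X X' 0 = 0"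
| "mpow_diff X X' (Suc n) = X' ** mpow X n + X ** mpow_diff X X' n"

lemma mpow_has_vector_derivative:
  assumes "(X has_vector_derivative X') (at b within S)"
  shows "((\<lambda>b. mpow (X b) n) has_vector_derivative mpow_diff (X b) X' n) (at b within S)"
proof (induction n)
  case 0 thus ?case by simp
next
  case (Suc n)
  from bounded_bilinear.has_vector_derivative[OF bilinear_mmult assms Suc]
  show ?case by (simp add: add.commute)
qed

lemma mpow_commute: "Y ** X = X ** Y \<Longrightarrow> Y ** mpow X n = mpow X n ** (Y::'n::finite cmat)"
proof (induction n)
  case 0 thus ?case by simp
next
  case (Suc n)
  have "Y ** mpow X (Suc n) = (Y ** X) ** mpow X n" by (simp add: matrix_mul_assoc)
  also have "\<dots> = X ** (Y ** mpow X n)" using Suc.prems by (simp add: matrix_mul_assoc)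
  also have "\<dots> = X ** (mpow X n ** Y)" using Suc by simp
  finally show ?case by (simp add: matrix_mul_assoc)
qed

lemma mpow_mult_bounded:
  fixes X :: "'n::finite cmat"
  assumes r: "r \<ge> 0" and X: "mult_bounded X r"
  shows "mult_bounded (mpow X n) (r ^ n)"
proof (induction n)
  case 0 thus ?case by (simp add: mult_bounded_def)
next
  case (Suc n)
  show ?case unfolding mult_bounded_def
  proof (intro allI conjI)
    fix Z :: "'n cmat"
    have "norm (X ** (mpow X n ** Z)) \<le> r * norm (mpow X n ** Z)"
      using X unfolding mult_bounded_def by blast
    also have "\<dots> \<le> r * (r ^ n * norm Z)"
      using Suc r unfolding mult_bounded_def by (blast intro: mult_left_mono)
    finally show "norm (mpow X (Suc n) ** Z) \<le> r ^ Suc n * norm Z"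
      by (simp add: matrix_mul_assoc mult_ac)
    have "norm ((Z ** mpow X n) ** X) \<le> r * norm (Z ** mpow X n)"
      using X unfolding mult_bounded_def by blast
    also have "\<dots> \<le> r * (r ^ n * norm Z)"
      using Suc r unfolding mult_bounded_def by (blast intro: mult_left_mono)
    also have "(Z ** mpow X n) ** X = Z ** mpow X (Suc n)"
      using mpow_commute[of X X n] by (simp add: matrix_mul_assoc)
    finally show "norm (Z ** mpow X (Suc n)) \<le> r ^ Suc n * norm Z"
      by (simp add: mult_ac)
  qed
qed

lemma mpow_diff_bound:
  assumes r: "r \<ge> 0" and X: "mult_bounded X r"
  shows "norm (mpow_diff X X' (Suc n)) \<le> real (Suc n) * r ^ n * norm X'"
proof (induction n)
  case 0 thus ?case by simp
next
  case (Suc n)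
  have "norm (mpow_diff X X' (Suc (Suc n))) \<le> norm (X' ** mpow X (Suc n)) + norm (X ** mpow_diff X X' (Suc n))"
    by (simp add: norm_triangle_ineq)
  also have "\<dots> \<le> r ^ Suc n * norm X' + r * (real (Suc n) * r ^ n * norm X')"
    using mpow_mult_bounded[OF r X, of "Suc n"] X Suc r unfolding mult_bounded_def
    by (intro add_mono) (auto intro: order_trans mult_left_mono)
  also have "\<dots> = real (Suc (Suc n)) * r ^ Suc n * norm X'" by (simp add: algebra_simps)
  finally show ?case .
qed

definition log_series_diff :: "'n::finite cmat \<Rightarrow> 'n cmat \<Rightarrow> 'n cmat" where
  "log_series_diff X X' = (\<Sum>k. (1 / real (Suc k)) *\<^sub>R mpow_diff X X' (Suc k))"

lemma log_series_diff_term_bound: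
  assumes r: "r \<ge> 0" and X: "mult_bounded X r"
  shows "norm ((1 / real (Suc k)) *\<^sub>R mpow_diff X X' (Suc k)) \<le> r ^ k * norm X'"
proof -
  have "norm ((1 / real (Suc k)) *\<^sub>R mpow_diff X X' (Suc k)) = (1 / real (Suc k)) * norm (mpow_diff X X' (Suc k))"
    by simp
  also have "\<dots> \<le> (1 / real (Suc k)) * (real (Suc k) * r ^ k * norm X')"
    by (intro mult_left_mono mpow_diff_bound[OF r X]) simp
  finally show ?thesis by simp
qed

lemma series_has_vector_derivative_geometric:
  fixes f D :: "nat \<Rightarrow> real \<Rightarrow> 'a::banach"
  assumes T: "open T" "convex T" "b0 \<in> T"
    and f: "\<And>k b. b \<in> T \<Longrightarrow> (f k has_vector_derivative D k b) (at b within T)"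
    and D: "\<And>k b. b \<in> T \<Longrightarrow> norm (D k b) \<le> C * r ^ k" and r: "0 \<le> r" "r < 1"
    and s: "summable (\<lambda>k. f k b0)"
  shows "\<exists>g. (\<forall>x\<in>T. (\<lambda>k. f k x) sums g x) \<and> (g has_vector_derivative (\<Sum>k. D k b0)) (at b0)"
proof -
  have summ: "summable (\<lambda>k. C * r ^ k)" using r by (intro summable_mult summable_geometric) simp
  have ul: "uniform_limit T (\<lambda>n b. \<Sum>i<n. D i b) (\<lambda>b. \<Sum>i. D i b) sequentially"
    by (rule Weierstrass_m_test_ev[OF _ summ]) (use D in auto)
  have fd: "(f k has_derivative (\<lambda>t. t *\<^sub>R D k b)) (at b within T)" if "b \<in> T" for k b
    using f[OF that] by (simp add: has_vector_derivative_def)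
  have "\<exists>g. \<forall>x\<in>T. (\<lambda>n. f n x) sums (g x) \<and> (g has_derivative (\<lambda>t. t *\<^sub>R (\<Sum>i. D i x))) (at x within T)"
  proof (rule has_derivative_series[OF T(2) fd _ T(3) summable_sums[OF s]])
    fix e :: real assume "e > 0"
    from uniform_limitD[OF ul this]
    have ev: "\<forall>\<^sub>F n in sequentially. \<forall>x\<in>T. dist (\<Sum>i<n. D i x) (\<Sum>i. D i x) < e" .
    show "\<forall>\<^sub>F n in sequentially. \<forall>x\<in>T. \<forall>h. norm ((\<Sum>i<n. h *\<^sub>R D i x) - h *\<^sub>R (\<Sum>i. D i x)) \<le> e * norm h"
    proof (rule eventually_mono[OF ev], intro ballI allI)
      fix n x h assume a: "\<forall>x\<in>T. dist (\<Sum>i<n. D i x) (\<Sum>i. D i x) < e" and x: "x \<in> T"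
      have "norm ((\<Sum>i<n. h *\<^sub>R D i x) - h *\<^sub>R (\<Sum>i. D i x)) = \<bar>h\<bar> * norm ((\<Sum>i<n. D i x) - (\<Sum>i. D i x))"
        by (simp add: scaleR_sum_right[symmetric] scaleR_diff_right[symmetric])
      also have "\<dots> \<le> \<bar>h\<bar> * e" using a x by (intro mult_left_mono) (auto simp: dist_norm)
      finally show "norm ((\<Sum>i<n. h *\<^sub>R D i x) - h *\<^sub>R (\<Sum>i. D i x)) \<le> e * norm h" by (simp add: mult.commute)
    qed
  qed auto
  then obtain g where "\<forall>x\<in>T. (\<lambda>n. f n x) sums (g x)"
    and "(g has_derivative (\<lambda>t. t *\<^sub>R (\<Sum>i. D i b0))) (at b0 within T)" using T(3) by blast
  thus ?thesis
    unfolding at_within_open[OF T(3,1)] has_vector_derivative_def[symmetric] by blast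
qed

lemma log_series_has_vector_derivative:
  fixes X X' :: "real \<Rightarrow> 'n::finite cmat"
  assumes T: "open T" "convex T" "b0 \<in> T"
    and X: "\<And>b. b \<in> T \<Longrightarrow> (X has_vector_derivative X' b) (at b)"
    and r: "0 \<le> r" "r < 1" and bounded: "\<And>b. b \<in> T \<Longrightarrow> mult_bounded (X b) r"
    and C: "\<And>b. b \<in> T \<Longrightarrow> norm (X' b) \<le> C"
  shows "((\<lambda>b. log_series (X b)) has_vector_derivative log_series_diff (X b0) (X' b0)) (at b0)"
proof -
  define f where "f k b = (1 / real (Suc k)) *\<^sub>R mpow (X b) (Suc k)" for k b
  define D where "D k b = (1 / real (Suc k)) *\<^sub>R mpow_diff (X b) (X' b) (Suc k)" for k b
  have "(f k has_vector_derivative D k b) (at b within T)" if "b \<in> T" for k b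
    unfolding f_def D_def using has_vector_derivative_at_within[OF X[OF that]]
    by (intro bounded_linear.has_vector_derivative[OF bounded_linear_scaleR_right]
        mpow_has_vector_derivative)
  moreover have "norm (D k b) \<le> C * r ^ k" if "b \<in> T" for k b
  proof -
    have "norm (D k b) \<le> r ^ k * norm (X' b)"
      unfolding D_def by (rule log_series_diff_term_bound[OF r(1) bounded[OF that]])
    also have "\<dots> \<le> r ^ k * C" by (intro mult_left_mono C that) (use r in simp)
    finally show ?thesis by (simp add: mult.commute)
  qed
  moreover have "summable (\<lambda>k. f k b0)"
  proof (rule summable_comparison_test[OF _ summable_mult[OF summable_geometric[of r]]])
    have "norm (f k b0) \<le> r ^ k * norm (mat 1 :: 'n cmat)" for k
    proof -
      have "norm (f k b0) = (1 / real (Suc k)) * norm (mpow (X b0) (Suc k) ** mat 1)"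
        by (simp add: f_def)
      also have "\<dots> \<le> norm (mpow (X b0) (Suc k) ** mat 1)"
        by (rule mult_left_le_one_le) auto
      also have "\<dots> \<le> r ^ Suc k * norm (mat 1 :: 'n cmat)"
        using mpow_mult_bounded[OF r(1) bounded[OF T(3)]] unfolding mult_bounded_def by blast
      also have "\<dots> \<le> r ^ k * norm (mat 1 :: 'n cmat)"
        by (intro mult_right_mono power_decreasing) (use r in auto)
      finally show ?thesis .
    qed
    thus "\<exists>N. \<forall>n\<ge>N. norm (f n b0) \<le> norm (mat 1 :: 'n cmat) * r ^ n"
      by (auto simp: mult.commute)
  qed (use r in auto)
  ultimately obtain g where g: "\<forall>x\<in>T. (\<lambda>k. f k x) sums g x"
    and gd: "(g has_vector_derivative (\<Sum>k. D k b0)) (at b0)"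
    using series_has_vector_derivative_geometric[OF T, of f D C r] r by blast
  have "g x = log_series (X x)" if "x \<in> T" for x
    using g that unfolding log_series_def f_def by (simp add: sums_unique)
  hence "((\<lambda>b. log_series (X b)) has_vector_derivative (\<Sum>i. D i b0)) (at b0)"
    by (intro has_vector_derivative_transform_within_open[OF gd T(1,3)]) simp
  thus ?thesis unfolding log_series_diff_def D_def .
qed

lemma trace_mpow_diff:
  fixes X X' Y :: "'n::finite cmat"
  shows "Y ** X = X ** Y \<Longrightarrow> trace (Y ** mpow_diff X X' (Suc n)) = of_nat (Suc n) * trace (Y ** mpow X n ** X')"
proof (induction n arbitrary: Y)
  case 0 thus ?case by simp
next
  case (Suc n)
  have c1: "(Y ** X) ** X = X ** (Y ** X)"
    using Suc.prems by (metis matrix_mul_assoc)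
  have "trace (Y ** mpow_diff X X' (Suc (Suc n))) = trace (Y ** (X' ** mpow X (Suc n))) + trace ((Y ** X) ** mpow_diff X X' (Suc n))"
    by (simp only: mpow_diff.simps matrix_add_ldistrib trace_add matrix_mul_assoc)
  also have "trace ((Y ** X) ** mpow_diff X X' (Suc n)) = of_nat (Suc n) * trace (Y ** X ** mpow X n ** X')"
    by (rule Suc.IH[OF c1])
  also have "Y ** X ** mpow X n ** X' = Y ** mpow X (Suc n) ** X'" by (simp add: matrix_mul_assoc)
  also have "trace (Y ** (X' ** mpow X (Suc n))) = trace (Y ** mpow X (Suc n) ** X')"
  proof -
    have "trace (Y ** (X' ** mpow X (Suc n))) = trace (mpow X (Suc n) ** (Y ** X'))"
      by (metis matrix_mul_assoc trace_mul_sym)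
    also have "\<dots> = trace (Y ** mpow X (Suc n) ** X')"
      by (metis matrix_mul_assoc mpow_commute[OF Suc.prems])
    finally show ?thesis .
  qed
  finally show ?case by (simp add: algebra_simps)
qed

lemma trace_log_series_diff_sums:
  fixes X X' Y :: "'n::finite cmat"
  assumes YX: "Y ** X = X ** Y" and r: "0 \<le> r" "r < 1" and X: "mult_bounded X r"
  shows "(\<lambda>k. trace (Y ** mpow X k ** X')) sums trace (Y ** log_series_diff X X')"
proof -
  define D where "D k = (1 / real (Suc k)) *\<^sub>R mpow_diff X X' (Suc k)" for k
  have "summable (\<lambda>k. norm (D k))"
    by (rule summable_comparison_test[OF _ summable_mult2[OF summable_geometric[of r]]])
       (use log_series_diff_term_bound[OF r(1) X] r in \<open>auto simp: D_def\<close>)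
  hence "summable D" by (rule summable_norm_cancel)
  hence "D sums log_series_diff X X'" unfolding log_series_diff_def D_def by (simp add: summable_sums)
  from bounded_linear.sums[OF bounded_linear_trace_mult this, of Y]
  have "(\<lambda>k. trace (Y ** D k)) sums trace (Y ** log_series_diff X X')" .
  moreover have "trace (Y ** D k) = trace (Y ** mpow X k ** X')" for k
  proof -
    have "(1::complex) + of_nat k = of_nat (Suc k)" by simp
    hence "(1::complex) + of_nat k \<noteq> 0" by (simp only: of_nat_eq_0_iff)
    thus ?thesis
      unfolding D_def scaleR_mult_right trace_scaleR trace_mpow_diff[OF YX]
      by (simp add: scaleR_conv_of_real)
  qed
  ultimately show ?thesis by simp
qed

text \<open>Against 1 - X the k-th term becomes Tr(X^k X') - Tr(X^(k+1) X'), so the series telescopes.\<close>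
lemma trace_log_series_diff:
  fixes X X' :: "'n::finite cmat"
  assumes r: "0 \<le> r" "r < 1" and X: "mult_bounded X r"
  shows "trace ((mat 1 - X) ** log_series_diff X X') = trace X'"
proof -
  have YX: "(mat 1 - X) ** X = X ** (mat 1 - X)" by (simp add: mult_diff_left mult_diff_right)
  define a where "a k = trace (mpow X k ** X')" for k
  have t: "trace ((mat 1 - X) ** mpow X k ** X') = a k - a (Suc k)" for k
    unfolding a_def by (simp add: mult_diff_left trace_sub matrix_mul_assoc)
  have "(\<lambda>k. r ^ k * norm X') \<longlonglongrightarrow> 0"
    by (intro tendsto_mult_left_zero LIMSEQ_power_zero) (use r in simp)
  moreover have "\<forall>\<^sub>F k in sequentially. norm (mpow X k ** X') \<le> r ^ k * norm X'"
    using mpow_mult_bounded[OF r(1) X] unfolding mult_bounded_def by simp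
  ultimately have "(\<lambda>k. mpow X k ** X') \<longlonglongrightarrow> 0"
    by (rule Lim_null_comparison[rotated])
  from bounded_linear.tendsto[OF bounded_linear_trace_mult[of "mat 1"] this]
  have "a \<longlonglongrightarrow> 0" unfolding a_def by simp
  from telescope_sums'[OF this]
  have "(\<lambda>k. trace ((mat 1 - X) ** mpow X k ** X')) sums trace X'" by (simp add: t a_def)
  moreover have "(\<lambda>k. trace ((mat 1 - X) ** mpow X k ** X')) sums trace ((mat 1 - X) ** log_series_diff X X')"
    by (rule trace_log_series_diff_sums[OF YX r X])
  ultimately show ?thesis using sums_unique2 by blast
qed

lemma mlog_has_vector_derivative_trace:
  fixes M M' :: "real \<Rightarrow> 'n::finite cmat"
  assumes T: "open T" "convex T" "\<beta> \<in> T"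
    and M: "\<And>b. b \<in> T \<Longrightarrow> (M has_vector_derivative M' b) (at b)"
    and M'_bound: "\<And>b. b \<in> T \<Longrightarrow> norm (M' b) \<le> C"
    and a: "0 < a"
    and spectrum: "\<And>b. b \<in> T \<Longrightarrow> \<exists>W q. unitary W \<and> M b = udiag W q \<and> (\<forall>i. a \<le> q i \<and> q i \<le> B)"
  shows "\<exists>L'. ((\<lambda>b. mlog (M b)) has_vector_derivative L') (at \<beta>) \<and> trace (M \<beta> ** L') = trace (M' \<beta>)"
proof -
  have aB: "a \<le> B" using spectrum[OF T(3)] by (meson order_trans)
  define c where "c = 2 * B"
  define r where "r = 1 - a / c"
  have c: "c > 0" and r: "0 \<le> r" "r < 1"
    using a aB by (auto simp: c_def r_def field_simps)
  define X where "X b = mat 1 - (1/c) *\<^sub>R M b" for b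
  have log: "mlog (M b) = ln c *\<^sub>R mat 1 - log_series (X b)" and bounded: "mult_bounded (X b) r"
    if b: "b \<in> T" for b
  proof -
    obtain W q where W: "unitary W" and Mb: "M b = udiag W q" and q: "\<And>i. a \<le> q i \<and> q i \<le> B"
      using spectrum[OF b] by blast
    have "0 < q i \<and> q i \<le> c" for i using a q[of i] unfolding c_def by linarith
    thus "mlog (M b) = ln c *\<^sub>R mat 1 - log_series (X b)"
      unfolding X_def Mb by (rule mlog_udiag_eq_log_series[OF W c])
    have "X b = udiag W (\<lambda>i. 1 - q i / c)"
      unfolding X_def Mb udiag_one[OF W, symmetric] udiag_scaleR udiag_diff by simp
    moreover have "\<bar>1 - q i / c\<bar> \<le> r" for i
      using q[of i] a c unfolding r_def c_def by (auto simp: field_simps abs_le_iff)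
    ultimately show "mult_bounded (X b) r" by (simp add: udiag_mult_bounded[OF W])
  qed
  have X: "(X has_vector_derivative - (1/c) *\<^sub>R M' b) (at b)" if "b \<in> T" for b
    unfolding X_def using M[OF that]
    by (auto intro!: derivative_eq_intros simp: has_vector_derivative_def)
  have "((\<lambda>b. log_series (X b)) has_vector_derivative log_series_diff (X \<beta>) (- (1/c) *\<^sub>R M' \<beta>)) (at \<beta>)"
    using M'_bound c
    by (intro log_series_has_vector_derivative[OF T X r bounded, of "C / c"]) (auto simp: divide_right_mono)
  hence "((\<lambda>b. ln c *\<^sub>R mat 1 - log_series (X b)) has_vector_derivative
      - log_series_diff (X \<beta>) (- (1/c) *\<^sub>R M' \<beta>)) (at \<beta>)"
    using has_vector_derivative_diff[OF has_vector_derivative_const] by fastforce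
  hence "((\<lambda>b. mlog (M b)) has_vector_derivative - log_series_diff (X \<beta>) (- (1/c) *\<^sub>R M' \<beta>)) (at \<beta>)"
    by (rule has_vector_derivative_transform_within_open[OF _ T(1,3)]) (simp add: log)
  moreover have "trace (M \<beta> ** - log_series_diff (X \<beta>) (- (1/c) *\<^sub>R M' \<beta>)) = trace (M' \<beta>)"
  proof -
    have "M \<beta> = c *\<^sub>R (mat 1 - X \<beta>)" unfolding X_def using c by simp
    thus ?thesis
      using trace_log_series_diff[OF r bounded[OF T(3)], of "- (1/c) *\<^sub>R M' \<beta>"] c
      by (simp add: scaleR_mult_left mult_uminus_right trace_uminus trace_scaleR)
  qed
  ultimately show ?thesis by blast
qed

section \<open>Gibbs states and the effective Hamiltonian\<close>

lemma udiag_expand: "udiag U d = (\<Sum>i\<in>UNIV. d i *\<^sub>R udiag U (\<lambda>j. if j = i then 1 else 0))"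
proof -
  have "(\<Sum>i\<in>UNIV. d i *\<^sub>R udiag U (\<lambda>j. if j = i then 1 else 0))
      = udiag U (\<lambda>j. \<Sum>i\<in>UNIV. d i * (if j = i then 1 else 0))"
    by (simp add: udiag_scaleR udiag_sum)
  also have "(\<lambda>j. \<Sum>i\<in>UNIV. d i * (if j = i then 1 else 0)) = d"
    by (simp add: fun_eq_iff if_distrib cong: if_cong)
  finally show ?thesis by simp
qed

lemma udiag_has_vector_derivative:
  assumes "\<And>i. (f i has_real_derivative f' i) (at b within S)"
  shows "((\<lambda>b. udiag U (\<lambda>i. f i b)) has_vector_derivative udiag U f') (at b within S)"
proof -
  define P where "P i = udiag U (\<lambda>j. if j = i then 1 else 0)" for i
  have "((\<lambda>b. \<Sum>i\<in>UNIV. f i b *\<^sub>R P i) has_vector_derivative (\<Sum>i\<in>UNIV. f' i *\<^sub>R P i)) (at b within S)"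
  proof (intro has_vector_derivative_sum)
    fix i
    have "((\<lambda>b. f i b) has_vector_derivative f' i) (at b within S)"
      using assms[of i] by (simp add: has_real_derivative_iff_has_vector_derivative)
    from bounded_linear.has_vector_derivative[OF bounded_linear_scaleR_left this]
    show "((\<lambda>b. f i b *\<^sub>R P i) has_vector_derivative f' i *\<^sub>R P i) (at b within S)" .
  qed
  thus ?thesis unfolding P_def udiag_expand[of U "\<lambda>i. f i _"] udiag_expand[of U f'] .
qed

lemma norm_udiag_le:
  "norm (udiag U d) \<le> (\<Sum>i\<in>UNIV. \<bar>d i\<bar> * norm (udiag U (\<lambda>j. if j = i then 1 else 0)))"
  using norm_sum[of "\<lambda>i. d i *\<^sub>R udiag U (\<lambda>j. if j = i then 1 else 0)" UNIV]
  by (simp flip: udiag_expand)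

lemma mlog_pinch_mexp_has_vector_derivative:
  fixes H0 H :: "'n::finite cmat"
  assumes H0: "hermitian H0" and H: "hermitian H" and \<beta>: "\<beta> > 0"
  shows "\<exists>L'. ((\<lambda>b. mlog (pinch H0 (mexp ((- b) *\<^sub>R H)))) has_vector_derivative L') (at \<beta>)
    \<and> trace (pinch H0 (mexp ((- \<beta>) *\<^sub>R H)) ** L') = - trace (H ** mexp ((- \<beta>) *\<^sub>R H))"
proof -
  obtain V e0 where V: "unitary V" and H0_eq: "H0 = udiag V e0" using hermitian_eq_udiag[OF H0] by blast
  obtain W h where W: "unitary W" and H_eq: "H = udiag W h" using hermitian_eq_udiag[OF H] by blast
  define E where "E b = udiag W (\<lambda>i. exp (- b * h i))" for b
  define E' where "E' b = udiag W (\<lambda>i. - h i * exp (- b * h i))" for b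
  have mexp: "mexp ((- b) *\<^sub>R H) = E b" for b
    unfolding H_eq E_def udiag_scaleR mexp_udiag[OF W] by simp
  define K where "K = (\<Sum>i\<in>UNIV. \<bar>h i\<bar>)"
  define T where "T = {\<beta>/2 <..< 2*\<beta>}"
  have exp_bounds: "exp (- (2*\<beta>*K)) \<le> exp (- b * h i) \<and> exp (- b * h i) \<le> exp (2*\<beta>*K)"
    if "b \<in> T" for b i
  proof -
    have "\<bar>h i\<bar> \<le> K" unfolding K_def by (rule member_le_sum) auto
    moreover have "\<bar>b\<bar> \<le> 2*\<beta>" using that \<beta> by (auto simp: T_def)
    ultimately have "\<bar>b * h i\<bar> \<le> 2*\<beta>*K" unfolding abs_mult by (intro mult_mono) auto
    thus ?thesis by (simp add: abs_le_iff)
  qed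
  obtain Kp where Kp: "Kp > 0" "\<And>Y. norm (pinch H0 Y) \<le> norm Y * Kp"
    using bounded_linear.pos_bounded[OF bounded_linear_pinch[OF V]] unfolding H0_eq by blast
  define C where "C = (\<Sum>i\<in>UNIV. \<bar>h i\<bar> * exp (2*\<beta>*K) * norm (udiag W (\<lambda>j. if j = i then 1 else 0))) * Kp"
  have "\<exists>L'. ((\<lambda>b. mlog (pinch H0 (E b))) has_vector_derivative L') (at \<beta>)
      \<and> trace (pinch H0 (E \<beta>) ** L') = trace (pinch H0 (E' \<beta>))"
  proof (rule mlog_has_vector_derivative_trace)
    show "open T" "convex T" "\<beta> \<in> T" using \<beta> by (auto simp: T_def)
    show "((\<lambda>b. pinch H0 (E b)) has_vector_derivative pinch H0 (E' b)) (at b)" for b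
      unfolding H0_eq E_def E'_def
      by (rule bounded_linear.has_vector_derivative[OF bounded_linear_pinch[OF V]],
          rule udiag_has_vector_derivative) (auto intro!: derivative_eq_intros)
    show "norm (pinch H0 (E' b)) \<le> C" if "b \<in> T" for b
    proof -
      have "norm (E' b) \<le> (\<Sum>i\<in>UNIV. \<bar>h i\<bar> * exp (2*\<beta>*K) * norm (udiag W (\<lambda>j. if j = i then 1 else 0)))"
        unfolding E'_def using exp_bounds[OF that]
        by (intro order_trans[OF norm_udiag_le] sum_mono mult_right_mono)
           (auto simp: abs_mult intro: mult_left_mono)
      thus ?thesis unfolding C_def using Kp by (meson mult_right_mono less_imp_le order_trans)
    qed
    show "0 < exp (- (2*\<beta>*K))" by simp
    show "\<exists>W q. unitary W \<and> pinch H0 (E b) = udiag W q \<and> (\<forall>i. exp (- (2*\<beta>*K)) \<le> q i \<and> q i \<le> exp (2*\<beta>*K))"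
      if "b \<in> T" for b
      unfolding H0_eq E_def using exp_bounds[OF that] by (intro pinch_udiag_spectrum_bounds[OF V W]) auto
  qed
  moreover have "trace (pinch H0 (E' \<beta>)) = - trace (H ** E \<beta>)"
    unfolding H0_eq trace_pinch[OF V] H_eq E_def E'_def udiag_mult[OF W]
    by (simp add: udiag_uminus[symmetric] trace_uminus)
  ultimately show ?thesis unfolding mexp by simp
qed

lemma pinch_scaleR_hermitian: "hermitian H0 \<Longrightarrow> pinch H0 (r *\<^sub>R X) = r *\<^sub>R pinch H0 X"
  using pinch_scaleR hermitian_eq_udiag by metis

lemma partition_fn_udiag:
  "unitary W \<Longrightarrow> partition_fn (udiag W h) b = (\<Sum>i\<in>UNIV. exp (- b * h i))"
  unfolding partition_fn_def udiag_scaleR by (simp add: mexp_udiag trace_udiag)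

lemma partition_fn_pos: "hermitian H \<Longrightarrow> partition_fn H b > 0"
  using hermitian_eq_udiag partition_fn_udiag by (metis exp_gt_zero sum_pos finite UNIV_not_empty)

lemma gibbs_udiag:
  assumes W: "unitary W"
  shows "gibbs (udiag W h) b = udiag W (\<lambda>i. exp (- b * h i) / (\<Sum>j\<in>UNIV. exp (- b * h j)))"
  unfolding gibbs_def partition_fn_udiag[OF W] udiag_scaleR mexp_udiag[OF W]
  by (simp add: udiag_scaleR)

lemma pinched_gibbs_eq_eff_ham:
  assumes H0: "hermitian H0" and H: "hermitian H" and \<beta>: "\<beta> > 0"
  shows "pinch H0 (gibbs H \<beta>) = (1 / partition_fn H \<beta>) *\<^sub>R mexp ((- \<beta>) *\<^sub>R eff_ham H0 H \<beta>)"
proof -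
  obtain W h where W: "unitary W" and H_eq: "H = udiag W h" using hermitian_eq_udiag[OF H] by blast
  have "mexp ((- \<beta>) *\<^sub>R H) = udiag W (\<lambda>i. exp (- \<beta> * h i))"
    unfolding H_eq udiag_scaleR mexp_udiag[OF W] by simp
  then obtain W' q where W': "unitary W'" and q: "pinch H0 (mexp ((- \<beta>) *\<^sub>R H)) = udiag W' q"
    and qpos: "\<And>i. q i > 0"
    using pinch_udiag_positive[OF H0 W, of "\<lambda>i. exp (- \<beta> * h i)"] by auto
  have "(- \<beta>) *\<^sub>R eff_ham H0 H \<beta> = mlog (udiag W' q)"
    unfolding eff_ham_def q using \<beta> by simp
  hence "mexp ((- \<beta>) *\<^sub>R eff_ham H0 H \<beta>) = pinch H0 (mexp ((- \<beta>) *\<^sub>R H))"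
    unfolding q by (simp add: mexp_mlog[OF W' qpos])
  thus ?thesis unfolding gibbs_def by (simp add: pinch_scaleR_hermitian[OF H0])
qed

lemma eff_ham_has_vector_derivative:
  assumes H0: "hermitian H0" and H: "hermitian H" and \<beta>: "\<beta> > 0"
  defines "\<rho>t \<equiv> pinch H0 (gibbs H \<beta>)" and "Ht \<equiv> eff_ham H0 H"
  shows "Ht differentiable (at \<beta>)"
    and "\<beta> *\<^sub>R trace (\<rho>t ** vector_derivative Ht (at \<beta>)) = trace (H ** gibbs H \<beta>) - trace (Ht \<beta> ** \<rho>t)"
proof -
  define M where "M b = pinch H0 (mexp ((- b) *\<^sub>R H))" for b
  define Z where "Z = partition_fn H \<beta>"
  define L where "L = mlog (M \<beta>)"
  obtain L' where dL: "((\<lambda>b. mlog (M b)) has_vector_derivative L') (at \<beta>)"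
    and trL': "trace (M \<beta> ** L') = - trace (H ** mexp ((- \<beta>) *\<^sub>R H))"
    using mlog_pinch_mexp_has_vector_derivative[OF H0 H \<beta>] unfolding M_def by blast
  have Ht: "Ht = (\<lambda>b. (- 1 / b) *\<^sub>R mlog (M b))" unfolding Ht_def eff_ham_def M_def ..
  have "((\<lambda>b. - 1 / b) has_real_derivative 1 / \<beta>\<^sup>2) (at \<beta>)"
    using \<beta> by (auto intro!: derivative_eq_intros simp: power2_eq_square)
  from has_vector_derivative_scaleR[OF this dL]
  have dHt: "(Ht has_vector_derivative (- 1 / \<beta>) *\<^sub>R L' + (1 / \<beta>\<^sup>2) *\<^sub>R L) (at \<beta>)"
    unfolding Ht L_def .
  have "\<beta> \<noteq> 0" using \<beta> by simp
  have "Z \<noteq> 0" using partition_fn_pos[OF H, of \<beta>] unfolding Z_def by linarith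
  have \<rho>t: "\<rho>t = (1 / Z) *\<^sub>R M \<beta>"
    unfolding \<rho>t_def gibbs_def M_def Z_def by (simp add: pinch_scaleR_hermitian[OF H0])
  have "\<beta> *\<^sub>R trace (\<rho>t ** ((- 1 / \<beta>) *\<^sub>R L' + (1 / \<beta>\<^sup>2) *\<^sub>R L))
      = (1 / Z) *\<^sub>R (- trace (M \<beta> ** L') + (1 / \<beta>) *\<^sub>R trace (M \<beta> ** L))"
    using \<beta> unfolding \<rho>t
    by (simp add: scaleR_mult_left scaleR_mult_right matrix_add_ldistrib mult_diff_right trace_add
        trace_sub trace_scaleR)
       (simp add: scaleR_conv_of_real power2_eq_square field_simps \<open>\<beta> \<noteq> 0\<close> \<open>Z \<noteq> 0\<close>)
  also have "\<dots> = trace (H ** gibbs H \<beta>) - trace (Ht \<beta> ** \<rho>t)"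
    unfolding trL' gibbs_def \<rho>t Ht L_def[symmetric] Z_def[symmetric]
    by (simp add: scaleR_mult_left scaleR_mult_right mult_uminus_left trace_uminus trace_scaleR
        trace_mul_sym[of L])
       (simp add: scaleR_conv_of_real field_simps \<open>\<beta> \<noteq> 0\<close> \<open>Z \<noteq> 0\<close>)
  finally show "\<beta> *\<^sub>R trace (\<rho>t ** vector_derivative Ht (at \<beta>)) = trace (H ** gibbs H \<beta>) - trace (Ht \<beta> ** \<rho>t)"
    unfolding vector_derivative_at[OF dHt] .
  show "Ht differentiable (at \<beta>)"
    using dHt unfolding has_vector_derivative_def differentiable_def by blast
qed

lemma trace_gibbs: "hermitian H \<Longrightarrow> trace (gibbs H b) = 1"
proof -
  assume "hermitian H"
  then obtain W h where W: "unitary W" and H: "H = udiag W h" using hermitian_eq_udiag by blast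
  have "(\<Sum>i\<in>UNIV. exp (- b * h i)) > 0" by (intro sum_pos) auto
  thus ?thesis unfolding H gibbs_udiag[OF W] trace_udiag[OF W]
    by (simp add: sum_divide_distrib[symmetric])
qed

lemma pinched_gibbs_entropy:
  assumes H0: "hermitian H0" and H: "hermitian H" and \<beta>: "\<beta> > 0"
  defines "\<rho>t \<equiv> pinch H0 (gibbs H \<beta>)" and "Ht \<equiv> eff_ham H0 H"
  shows "- trace (\<rho>t ** mlog \<rho>t) = \<beta> *\<^sub>R trace (Ht \<beta> ** \<rho>t) + complex_of_real (ln (partition_fn H \<beta>))"
proof -
  obtain V e0 where V: "unitary V" and H0_eq: "H0 = udiag V e0" using hermitian_eq_udiag[OF H0] by blast
  obtain W h where W: "unitary W" and H_eq: "H = udiag W h" using hermitian_eq_udiag[OF H] by blast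
  define Z where "Z = partition_fn H \<beta>"
  have Z: "Z > 0" unfolding Z_def by (rule partition_fn_pos[OF H])
  have "mexp ((- \<beta>) *\<^sub>R H) = udiag W (\<lambda>i. exp (- \<beta> * h i))"
    unfolding H_eq udiag_scaleR mexp_udiag[OF W] by simp
  then obtain W' q where W': "unitary W'" and q: "pinch H0 (mexp ((- \<beta>) *\<^sub>R H)) = udiag W' q"
    and qpos: "\<And>i. q i > 0"
    using pinch_udiag_positive[OF H0 W, of "\<lambda>i. exp (- \<beta> * h i)"] by auto
  define L where "L = mlog (udiag W' q)"
  have Ht: "Ht \<beta> = (- 1 / \<beta>) *\<^sub>R L" unfolding Ht_def eff_ham_def q L_def ..
  have \<rho>t: "\<rho>t = udiag W' (\<lambda>i. q i / Z)"
    unfolding \<rho>t_def gibbs_def pinch_scaleR_hermitian[OF H0] q Z_def[symmetric] udiag_scaleR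
    by (simp add: field_simps)
  have "mlog \<rho>t = udiag W' (\<lambda>i. ln (q i / Z))"
    unfolding \<rho>t using qpos Z by (intro mlog_udiag[OF W']) simp
  also have "(\<lambda>i. ln (q i / Z)) = (\<lambda>i. ln (q i) - ln Z)"
    using qpos Z by (intro ext ln_divide_pos)
  finally have "mlog \<rho>t = udiag W' (\<lambda>i. ln (q i) - ln Z)" .
  hence log\<rho>t: "mlog \<rho>t = L - ln Z *\<^sub>R mat 1"
    unfolding L_def mlog_udiag[OF W' qpos] by (simp add: udiag_diff[symmetric] udiag_const[OF W'] mat_scaleR)
  have "trace \<rho>t = 1"
    unfolding \<rho>t_def H0_eq trace_pinch[OF V] using trace_gibbs[OF H] .
  thus ?thesis
    unfolding log\<rho>t Ht Z_def[symmetric] using \<beta>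
    by (simp add: mult_diff_right scaleR_mult_left scaleR_mult_right mult_uminus_left trace_uminus
        trace_sub trace_scaleR trace_mul_sym[of L])
       (simp add: scaleR_conv_of_real)
qed

lemma gibbs_eq_udiag_pos:
  assumes "hermitian H"
  shows "\<exists>U p. unitary U \<and> (\<forall>i. p i > 0) \<and> gibbs H b = udiag U p"
proof -
  obtain W h where W: "unitary W" and H: "H = udiag W h" using hermitian_eq_udiag[OF assms] by blast
  have "(\<Sum>j\<in>UNIV. exp (- b * h j)) > 0" by (intro sum_pos) auto
  thus ?thesis unfolding H gibbs_udiag[OF W] using W by (intro exI conjI allI) auto
qed

lemma gibbs_pinch_entropy_increase:
  assumes "hermitian H0" and "hermitian H"
  shows "\<exists>x\<ge>0. trace (gibbs H b ** mlog (gibbs H b))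
    - trace (pinch H0 (gibbs H b) ** mlog (pinch H0 (gibbs H b))) = complex_of_real x"
proof -
  obtain U p where U: "unitary U" and p: "\<forall>i. p i > 0" and \<rho>: "gibbs H b = udiag U p"
    using gibbs_eq_udiag_pos[OF assms(2)] by blast
  show ?thesis unfolding \<rho> using p by (intro pinch_entropy_increase[OF assms(1) U]) simp
qed

lemma free_energy_udiag_has_derivative:
  fixes W :: "'n::finite cmat" and h :: "'n \<Rightarrow> real"
  assumes W: "unitary W" and \<beta>: "\<beta> > 0"
  defines "Z \<equiv> \<Sum>i\<in>UNIV. exp (- \<beta> * h i)"
  defines "E \<equiv> (\<Sum>i\<in>UNIV. h i * exp (- \<beta> * h i)) / Z"
  shows "(free_energy (udiag W h) has_real_derivative E / \<beta> + ln Z / \<beta>\<^sup>2) (at \<beta>)"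
    and "((\<lambda>b. b * free_energy (udiag W h) b) has_real_derivative E) (at \<beta>)"
proof -
  define Zf where "Zf b = (\<Sum>i\<in>UNIV. exp (- b * h i))" for b
  have Zf_pos: "Zf b > 0" for b unfolding Zf_def by (intro sum_pos) auto
  have F: "free_energy (udiag W h) = (\<lambda>b. - ln (Zf b) / b)"
    unfolding free_energy_def partition_fn_udiag[OF W] Zf_def ..
  have "(Zf has_real_derivative (\<Sum>i\<in>UNIV. - h i * exp (- \<beta> * h i))) (at \<beta>)"
    unfolding Zf_def by (rule DERIV_sum) (auto intro!: derivative_eq_intros)
  from DERIV_chain2[OF DERIV_ln_divide[OF Zf_pos] this]
  have "((\<lambda>b. ln (Zf b)) has_real_derivative - E) (at \<beta>)"
    unfolding E_def Z_def Zf_def by (simp add: sum_negf)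
  from DERIV_divide[OF DERIV_minus[OF this] DERIV_ident]
  show dF: "(free_energy (udiag W h) has_real_derivative E / \<beta> + ln Z / \<beta>\<^sup>2) (at \<beta>)"
    unfolding F using \<beta> by (simp add: Zf_def Z_def field_simps power2_eq_square)
  from DERIV_mult[OF DERIV_ident dF]
  show "((\<lambda>b. b * free_energy (udiag W h) b) has_real_derivative E) (at \<beta>)"
    unfolding F using \<beta> by (simp add: Zf_def Z_def field_simps power2_eq_square)
qed

lemma gibbs_thermodynamics:
  assumes H: "hermitian H" and \<beta>: "\<beta> > 0"
  defines "\<rho> \<equiv> gibbs H \<beta>" and "F \<equiv> free_energy H"
  shows "F differentiable (at \<beta>)"
    and "complex_of_real (\<beta>\<^sup>2 * deriv F \<beta>) = - trace (\<rho> ** mlog \<rho>)"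
    and "complex_of_real (deriv (\<lambda>b. b * F b) \<beta>) = trace (H ** \<rho>)"
    and "- trace (\<rho> ** mlog \<rho>) = \<beta> *\<^sub>R trace (H ** \<rho>) + complex_of_real (ln (partition_fn H \<beta>))"
proof -
  obtain W h where W: "unitary W" and H_eq: "H = udiag W h" using hermitian_eq_udiag[OF H] by blast
  define Z where "Z = (\<Sum>i\<in>UNIV. exp (- \<beta> * h i))"
  define E where "E = (\<Sum>i\<in>UNIV. h i * exp (- \<beta> * h i)) / Z"
  define p where "p i = exp (- \<beta> * h i) / Z" for i
  have Z: "Z > 0" unfolding Z_def by (intro sum_pos) auto
  have p: "p i > 0" for i using Z by (simp add: p_def)
  have sum_p: "(\<Sum>i\<in>UNIV. p i) = 1" using Z unfolding p_def Z_def by (simp flip: sum_divide_distrib)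
  have \<rho>: "\<rho> = udiag W p" unfolding \<rho>_def H_eq gibbs_udiag[OF W] p_def Z_def ..
  have dF: "(F has_real_derivative E / \<beta> + ln Z / \<beta>\<^sup>2) (at \<beta>)"
    and dbF: "((\<lambda>b. b * F b) has_real_derivative E) (at \<beta>)"
    using free_energy_udiag_has_derivative[OF W \<beta>, of h] unfolding F_def H_eq Z_def E_def by simp_all
  have mean: "(\<Sum>i\<in>UNIV. h i * p i) = E"
    unfolding E_def p_def by (simp add: sum_divide_distrib)
  have energy: "trace (H ** \<rho>) = complex_of_real E"
    unfolding H_eq \<rho> udiag_mult[OF W] trace_udiag[OF W] mean ..
  have "(\<Sum>i\<in>UNIV. p i * ln (p i)) = (\<Sum>i\<in>UNIV. - \<beta> * (h i * p i) - ln Z * p i)"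
    using Z by (intro sum.cong) (simp_all add: p_def ln_divide_pos field_simps)
  also have "\<dots> = - \<beta> * (\<Sum>i\<in>UNIV. h i * p i) - ln Z * (\<Sum>i\<in>UNIV. p i)"
    by (simp add: sum_subtractf sum_distrib_left)
  also have "\<dots> = - \<beta> * E - ln Z" unfolding mean sum_p by simp
  finally have entropy: "trace (\<rho> ** mlog \<rho>) = complex_of_real (- \<beta> * E - ln Z)"
    unfolding \<rho> mlog_udiag[OF W p] udiag_mult[OF W] trace_udiag[OF W] by simp
  show "F differentiable (at \<beta>)" using dF real_differentiable_def by blast
  show "complex_of_real (\<beta>\<^sup>2 * deriv F \<beta>) = - trace (\<rho> ** mlog \<rho>)"
    unfolding DERIV_imp_deriv[OF dF] entropy using \<beta> by (simp add: field_simps power2_eq_square)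
  show "complex_of_real (deriv (\<lambda>b. b * F b) \<beta>) = trace (H ** \<rho>)"
    unfolding DERIV_imp_deriv[OF dbF] energy ..
  show "- trace (\<rho> ** mlog \<rho>) = \<beta> *\<^sub>R trace (H ** \<rho>) + complex_of_real (ln (partition_fn H \<beta>))"
    using partition_fn_udiag[OF W, of h \<beta>] unfolding entropy energy H_eq[symmetric] Z_def[symmetric]
    by (simp add: scaleR_conv_of_real)
qed

theorem mainTheorem8:
  fixes H0 HI :: "'n::finite cmat" and lam \<beta> :: real
  assumes "hermitian H0" and "hermitian HI" and "\<beta> > 0"
  defines "H \<equiv> H0 + lam *\<^sub>R HI"
  defines "Z \<equiv> partition_fn H \<beta>"
  defines "\<rho> \<equiv> gibbs H \<beta>"
  defines "\<rho>t \<equiv> pinch H0 \<rho>"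
  defines "Ht \<equiv> eff_ham H0 H"
  defines "F \<equiv> free_energy H"
  defines "S \<equiv> \<beta>\<^sup>2 * deriv F \<beta>"
  defines "U \<equiv> deriv (\<lambda>b. b * F b) \<beta>"
  defines "St \<equiv> - trace (\<rho>t ** mlog \<rho>t)"
  defines "Ut \<equiv> trace (Ht \<beta> ** \<rho>t)"
  defines "dS \<equiv> - (\<beta>\<^sup>2) *\<^sub>R trace (\<rho>t ** vector_derivative Ht (at \<beta>))"
  defines "dU \<equiv> - \<beta> *\<^sub>R trace (\<rho>t ** vector_derivative Ht (at \<beta>))"
  shows "\<rho>t = (1 / Z) *\<^sub>R mexp ((- \<beta>) *\<^sub>R Ht \<beta>)
    \<and> F differentiable (at \<beta>) \<and> Ht differentiable (at \<beta>)
    \<and> complex_of_real S = - trace (\<rho> ** mlog \<rho>)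
    \<and> complex_of_real U = trace (H ** \<rho>)
    \<and> complex_of_real S = St - dS
    \<and> complex_of_real U = Ut - dU
    \<and> dU = dS / complex_of_real \<beta>
    \<and> dS \<in> \<real> \<and> Re dS \<ge> 0 \<and> dU \<in> \<real> \<and> Re dU \<ge> 0"
proof -
  have H: "hermitian H" unfolding H_def by (intro hermitian_add hermitian_scaleR assms(1,2))
  have \<beta>: "\<beta> > 0" by fact
  note thermo = gibbs_thermodynamics[OF H \<beta>, folded \<rho>_def F_def Z_def, folded S_def U_def]
  note eff = eff_ham_has_vector_derivative[OF assms(1) H \<beta>, folded \<rho>_def, folded \<rho>t_def Ht_def,
      folded Ut_def]
  have St: "St = \<beta> *\<^sub>R Ut + complex_of_real (ln Z)"
    unfolding St_def Ut_def \<rho>t_def \<rho>_def Ht_def Z_def by (rule pinched_gibbs_entropy[OF assms(1) H \<beta>])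
  obtain x where x: "x \<ge> 0" and "trace (\<rho> ** mlog \<rho>) - trace (\<rho>t ** mlog \<rho>t) = complex_of_real x"
    using gibbs_pinch_entropy_increase[OF assms(1) H] unfolding \<rho>t_def \<rho>_def by blast
  hence entropy_gap: "St - complex_of_real S = complex_of_real x"
    unfolding St_def thermo(2) by (simp add: algebra_simps)
  have dU_eq: "dU = Ut - trace (H ** \<rho>)"
    unfolding dU_def scaleR_minus_left eff(2) by simp
  have dS_dU: "dS = \<beta> *\<^sub>R dU"
    unfolding dS_def dU_eq power2_eq_square scaleR_minus_left scaleR_scaleR[symmetric] eff(2)
    by (simp add: algebra_simps)
  have "dS = St - complex_of_real S"
    unfolding dS_dU dU_eq St thermo(2) thermo(4) by (simp add: scaleR_diff_right)
  hence dS: "dS = complex_of_real x" using entropy_gap by simp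
  hence dU: "dU = complex_of_real (x / \<beta>)" using dS_dU \<beta> by (simp add: scaleR_conv_of_real field_simps)
  have \<rho>t_eq: "\<rho>t = (1 / Z) *\<^sub>R mexp ((- \<beta>) *\<^sub>R Ht \<beta>)"
    unfolding \<rho>t_def \<rho>_def Z_def Ht_def by (rule pinched_gibbs_eq_eff_ham[OF assms(1) H \<beta>])
  show ?thesis
  proof (intro conjI)
    show "complex_of_real S = St - dS" using entropy_gap dS by (simp add: algebra_simps)
    show "complex_of_real U = Ut - dU" using thermo(3) dU_eq by simp
    show "dU = dS / complex_of_real \<beta>" using dS_dU \<beta> by (simp add: scaleR_conv_of_real)
  qed (use \<rho>t_eq thermo(1-3) eff(1) dS dU x \<beta> in auto)
qed

end
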